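(* Let $G$ be a $(2,2)$-tight simple graph. Then there exists a placement $p$ such that the framework $(G,p)$ is well-positioned and minimally rigid in $(\mathbb{R}^2,\|\cdot\|_\infty)$.
   Context: A simple graph $G=(V,E)$ is $(2,2)$-tight if $|E|=2|V|-2$ and $i(X)\le 2|X|-2$ for every nonempty $X\subseteq V$, where $i(X)$ is the number of edges with both endpoints in $X$. A placement is an injective map $p:V\to\mathbb{R}^2$; $\|x\|_\infty=\max(|x_1|,|x_2|)$. $(G,p)$ is well-positioned if for each edge $uv$ there is a unique $k\in\{1,2\}$ with $\|p(u)-p(v)\|_\infty=|(p(u)-p(v))_k|$. The rigidity map is $f_G:(\mathbb{R}^2)^V\to\mathbb{R}^E$, $(x(v))_v\mapsto(\|x(v)-x(w)\|_\infty)_{vw\in E}$; for well-positioned $(G,p)$ it is differentiable at $p$. $(G,p)$ is rigid if every element of the kernel of the differential $df_G(p)$ is of the form $(a,\dots,a)$ with $a\in\mathbb{R}^2$; it is minimally rigid if it is rigid and $(G-e,p)$ is not rigid for every edge $e$. *)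

theory Defs
  imports "HOL-Analysis.Analysis"
begin

text \<open>Placements are points of (R^2)^V, i.e. elements of
  (real^2)^'a, a Euclidean space, so the rigidity map is differentiable in the
  usual Frechet sense.\<close>

definition simple_graph :: "'a::finite set set \<Rightarrow> bool" where
  "simple_graph E \<longleftrightarrow> (\<forall>e\<in>E. card e = 2)"

definition induced_edges :: "'a set set \<Rightarrow> 'a set \<Rightarrow> nat" where
  "induced_edges E X = card {e\<in>E. e \<subseteq> X}"

definition tight22 :: "'a::finite set set \<Rightarrow> bool" where
  "tight22 E \<longleftrightarrow>
     int (card E) = 2 * int (card (UNIV :: 'a set)) - 2 \<and>
     (\<forall>X::'a set. X \<noteq> {} \<longrightarrow> int (induced_edges E X) \<le> 2 * int (card X) - 2)"

definition linf :: "real^2 \<Rightarrow> real" where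
  "linf x = max \<bar>x$1\<bar> \<bar>x$2\<bar>"

definition placement :: "(real^2)^'a::finite \<Rightarrow> bool" where
  "placement p \<longleftrightarrow> inj (\<lambda>v. p$v)"

definition well_positioned :: "'a::finite set set \<Rightarrow> (real^2)^'a \<Rightarrow> bool" where
  "well_positioned E p \<longleftrightarrow>
     (\<forall>u w. {u,w} \<in> E \<longrightarrow>
        card {k::2. linf (p$u - p$w) = \<bar>(p$u - p$w)$k\<bar>} = 1)"

definition edge_len :: "'a::finite \<Rightarrow> 'a \<Rightarrow> (real^2)^'a \<Rightarrow> real" where
  "edge_len u w x = linf (x$u - x$w)"

definition rigid :: "'a::finite set set \<Rightarrow> (real^2)^'a \<Rightarrow> bool" where
  "rigid E p \<longleftrightarrow>
     (\<forall>x::(real^2)^'a.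
        (\<forall>u w. {u,w} \<in> E \<longrightarrow> frechet_derivative (edge_len u w) (at p) x = 0)
        \<longrightarrow> (\<exists>a::real^2. \<forall>v. x$v = a))"

definition minimally_rigid :: "'a::finite set set \<Rightarrow> (real^2)^'a \<Rightarrow> bool" where
  "minimally_rigid E p \<longleftrightarrow> rigid E p \<and> (\<forall>e\<in>E. \<not> rigid (E - {e}) p)"

end

theory Submission
  imports Defs
begin

text \<open>A (2,2)-tight graph is the union of two edge-disjoint spanning trees, and the placement
  realizes such a decomposition. We construct injective \<open>f, g : V \<rightarrow> \<real>\<close> such that the edges along
  which \<open>f\<close> and \<open>g\<close> change in the same direction (concordant edges) form a forest, and so do the
  other (discordant) edges; by the edge count both forests are spanning trees. Placing \<open>v\<close> at
  \<open>(f v + g v, f v - g v)\<close>, the \<open>\<infinity>\<close>-length of a concordant edge is attained only in the first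
  coordinate and that of a discordant edge only in the second, so the differential of the rigidity
  map reads every edge in a single coordinate. A vector in its kernel is therefore constant, in each
  coordinate, along the corresponding spanning tree, while deleting an edge cuts its tree and lets
  one side translate.

  The coordinates \<open>f, g\<close> exist for every (2,2)-sparse graph, by induction on the number of
  vertices: a vertex of degree at most two is removed and put back with its edges in different
  forests; a maximal proper tight set is contracted to a point and re-inserted as a small copy of
  its own realization; otherwise a vertex of degree three is removed by a 1-reduction (its three
  neighbours span a \<open>K\<^sub>4\<close> only if the whole graph is \<open>K\<^sub>4\<close>).\<close>

section \<open>Sparse edge sets\<close>

definition graph_on :: "'a set \<Rightarrow> 'a set set \<Rightarrow> bool" where
  "graph_on V E \<longleftrightarrow> finite V \<and> (\<forall>e\<in>E. e \<subseteq> V \<and> card e = 2)"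

definition vertex_degree :: "'a set set \<Rightarrow> 'a \<Rightarrow> nat" where
  "vertex_degree E v = card {e\<in>E. v \<in> e}"

definition kk_sparse :: "nat \<Rightarrow> 'a set set \<Rightarrow> bool" where
  "kk_sparse k S \<longleftrightarrow> (\<forall>X. finite X \<and> X \<noteq> {} \<longrightarrow> induced_edges S X + k \<le> k * card X)"

text \<open>For a set of two-element edges, (1,1)-sparsity is acyclicity.\<close>
abbreviation forest :: "'a set set \<Rightarrow> bool" where
  "forest S \<equiv> kk_sparse 1 S"

lemma graph_on_finite_edges: "graph_on V E \<Longrightarrow> finite E"
  unfolding graph_on_def by (meson Pow_iff finite_Pow_iff rev_finite_subset subsetI)

lemma graph_on_delete_vertex: "graph_on V E \<Longrightarrow> graph_on (V - {v}) {e\<in>E. v \<notin> e}"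
  unfolding graph_on_def by auto

lemma graph_on_edgeE:
  assumes "graph_on V E" "e \<in> E"
  obtains u w where "e = {u, w}" "u \<noteq> w" "u \<in> V" "w \<in> V"
  using assms unfolding graph_on_def by (metis card_2_iff insert_subset)

lemma two_element_set_eq: "card e = 2 \<Longrightarrow> u \<in> e \<Longrightarrow> w \<in> e \<Longrightarrow> u \<noteq> w \<Longrightarrow> e = {u, w}"
  by (auto simp: card_2_iff)

lemma edge_at_vertex: "card e = 2 \<Longrightarrow> v \<in> e \<Longrightarrow> \<exists>u. u \<noteq> v \<and> e = {v, u}"
  by (metis card_2_iff insert_commute insertE singletonD)

lemma induced_edges_mono: "S \<subseteq> T \<Longrightarrow> finite T \<Longrightarrow> induced_edges S X \<le> induced_edges T X"
  unfolding induced_edges_def by (rule card_mono) auto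

lemma induced_edges_insert:
  assumes "e \<notin> S" "finite S"
  shows "induced_edges (insert e S) X = induced_edges S X + (if e \<subseteq> X then 1 else 0)"
proof -
  have "{x\<in>insert e S. x \<subseteq> X} = (if e \<subseteq> X then insert e {x\<in>S. x \<subseteq> X} else {x\<in>S. x \<subseteq> X})"
    by auto
  then show ?thesis
    unfolding induced_edges_def using assms by (simp add: card_insert_if)
qed

lemma induced_edges_remove:
  "e \<in> S \<Longrightarrow> finite S \<Longrightarrow>
    induced_edges S X = induced_edges (S - {e}) X + (if e \<subseteq> X then 1 else 0)"
  using induced_edges_insert[of e "S - {e}" X] by (simp add: insert_absorb)

lemma induced_edges_restrict: "\<forall>e\<in>S. e \<subseteq> W \<Longrightarrow> induced_edges S X = induced_edges S (X \<inter> W)"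
  unfolding induced_edges_def by (rule arg_cong[where f = card]) auto

lemma induced_edges_avoid: "\<forall>e\<in>S. v \<notin> e \<Longrightarrow> induced_edges S X = induced_edges S (X - {v})"
  unfolding induced_edges_def by (rule arg_cong[where f = card]) auto

lemma induced_edges_graph_on: "graph_on V E \<Longrightarrow> induced_edges E V = card E"
  unfolding induced_edges_def graph_on_def by (metis (no_types, lifting) Collect_cong Collect_mem_eq)

lemma kk_sparse_mono: "kk_sparse k T \<Longrightarrow> S \<subseteq> T \<Longrightarrow> finite T \<Longrightarrow> kk_sparse k S"
  unfolding kk_sparse_def by (meson add_le_mono1 induced_edges_mono le_trans)

lemma kk_sparse_empty: "kk_sparse k {}"
  unfolding kk_sparse_def induced_edges_def by (auto simp: Suc_le_eq card_gt_0_iff)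

lemma kk_sparseD: "kk_sparse k S \<Longrightarrow> finite X \<Longrightarrow> X \<noteq> {} \<Longrightarrow> induced_edges S X + k \<le> k * card X"
  unfolding kk_sparse_def by blast

lemma card_Diff_vertex: "finite X \<Longrightarrow> v \<in> X \<Longrightarrow> card (X - {v}) + 1 = card X"
  by (metis card_Suc_Diff1 Suc_eq_plus1)

lemma forest_insert_pendant:
  assumes "forest S" "finite S" "\<forall>e\<in>S. v \<notin> e" "v \<noteq> a"
  shows "forest (insert {v, a} S)"
  unfolding kk_sparse_def
proof (intro allI impI)
  fix X :: "'a set" assume X: "finite X \<and> X \<noteq> {}"
  have count: "induced_edges (insert {v, a} S) X = induced_edges S X + (if {v, a} \<subseteq> X then 1 else 0)"
    using assms(3) by (intro induced_edges_insert assms(2)) auto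
  show "induced_edges (insert {v, a} S) X + 1 \<le> 1 * card X"
  proof (cases "{v, a} \<subseteq> X")
    case False
    then show ?thesis using count kk_sparseD[OF assms(1)] X by auto
  next
    case True
    then have "X - {v} \<noteq> {}" using assms(4) by auto
    then have "induced_edges S (X - {v}) + 1 \<le> card (X - {v})"
      using kk_sparseD[OF assms(1)] X by auto
    then show ?thesis
      using count True induced_edges_avoid[OF assms(3)] card_Diff_vertex[of X v] X by auto
  qed
qed

lemma forest_insert_pendant_at_most_one:
  assumes "forest S" "finite S" "\<forall>e\<in>S. v \<notin> e"
    and "\<forall>e\<in>T. v \<in> e \<and> card e = 2" "finite T" "card T \<le> 1"
  shows "forest (S \<union> T)"
proof (cases "T = {}")
  case True
  then show ?thesis using assms by simp
next
  case False
  then have "card T = 1" using assms(5,6) by (simp add: le_Suc_eq)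
  then obtain e where T: "T = {e}" by (rule card_1_singletonE)
  then obtain a where "a \<noteq> v" "e = {v, a}" using assms(4) edge_at_vertex[of e v] by blast
  then show ?thesis using forest_insert_pendant[OF assms(1-3), of a] T by simp
qed

lemma forest_subdivide:
  assumes S: "forest S" "finite S" and ab: "{a, b} \<in> S" "a \<noteq> b"
    and v: "\<forall>e\<in>S. v \<notin> e" "v \<noteq> a" "v \<noteq> b"
  shows "forest (insert {v, a} (insert {v, b} (S - {{a, b}})))"
  unfolding kk_sparse_def
proof (intro allI impI)
  fix X :: "'a set" assume X: "finite X \<and> X \<noteq> {}"
  define S0 where "S0 = S - {{a, b}}"
  have "finite S0" "{v, b} \<notin> S0" "{v, a} \<notin> insert {v, b} S0"
    using S ab v unfolding S0_def by (auto simp: doubleton_eq_iff)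
  then have new: "induced_edges (insert {v, a} (insert {v, b} S0)) X =
      induced_edges S0 X + (if {v, a} \<subseteq> X then 1 else 0) + (if {v, b} \<subseteq> X then 1 else 0)"
    by (simp add: induced_edges_insert)
  have old: "induced_edges S Y = induced_edges S0 Y + (if {a, b} \<subseteq> Y then 1 else 0)" for Y
    unfolding S0_def by (rule induced_edges_remove[OF ab(1) S(2)])
  have S0_avoid: "\<forall>e\<in>S0. v \<notin> e" using v S0_def by auto
  have "induced_edges (insert {v, a} (insert {v, b} S0)) X + 1 \<le> card X"
  proof (cases "v \<in> X \<and> X \<noteq> {v}")
    case False
    then have "induced_edges (insert {v, a} (insert {v, b} S0)) X \<le> induced_edges S X"
      using new old[of X] v by auto
    then show ?thesis using kk_sparseD[OF S(1)] X by fastforce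
  next
    case True
    then have "X - {v} \<noteq> {}" by auto
    then have "induced_edges S (X - {v}) + 1 \<le> card (X - {v})"
      using kk_sparseD[OF S(1)] X by auto
    moreover have "(if {v, a} \<subseteq> X then 1 else 0) + (if {v, b} \<subseteq> X then 1 else 0)
        \<le> (if {a, b} \<subseteq> X - {v} then 1 else 0) + (1::nat)"
      using v by (cases "{v, a} \<subseteq> X"; cases "{v, b} \<subseteq> X") auto
    moreover have "card (X - {v}) + 1 = card X" by (rule card_Diff_vertex) (use True X in auto)
    ultimately show ?thesis
      using new old[of "X - {v}"] induced_edges_avoid[OF S0_avoid, of X] by linarith
  qed
  then show "induced_edges (insert {v, a} (insert {v, b} (S - {{a, b}}))) X + 1 \<le> 1 * card X"
    unfolding S0_def by simp
qed

lemma sum_vertex_degree: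
  assumes "graph_on V E"
  shows "(\<Sum>v\<in>V. vertex_degree E v) = 2 * card E"
proof -
  have fin: "finite E" "finite V" using assms graph_on_finite_edges graph_on_def by auto
  have "(\<Sum>v\<in>V. vertex_degree E v) = (\<Sum>v\<in>V. \<Sum>e\<in>E. of_bool (v \<in> e))"
    unfolding vertex_degree_def using fin by (simp add: Collect_conj_eq Int_commute)
  also have "\<dots> = (\<Sum>e\<in>E. \<Sum>v\<in>V. of_bool (v \<in> e))" by (rule sum.swap)
  also have "\<dots> = (\<Sum>e\<in>E. (2::nat))"
  proof (rule sum.cong)
    fix e assume "e \<in> E"
    then have "e \<subseteq> V" "card e = 2" using assms unfolding graph_on_def by auto
    then show "(\<Sum>v\<in>V. of_bool (v \<in> e)) = (2::nat)"
      using fin by (simp add: Int_absorb1 Int_commute Collect_mem_eq)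
  qed simp
  finally show ?thesis by simp
qed

lemma exists_vertex_degree_le_3:
  assumes "graph_on V E" "V \<noteq> {}" "kk_sparse 2 E"
  shows "\<exists>v\<in>V. vertex_degree E v \<le> 3"
proof (rule ccontr)
  assume "\<not> ?thesis"
  then have "(\<Sum>v\<in>V. (4::nat)) \<le> (\<Sum>v\<in>V. vertex_degree E v)" by (intro sum_mono) auto
  then have "4 * card V \<le> 2 * card E" using sum_vertex_degree[OF assms(1)] by simp
  moreover have "card E + 2 \<le> 2 * card V"
    using kk_sparseD[OF assms(3)] assms(1,2) induced_edges_graph_on[OF assms(1)]
    unfolding graph_on_def by metis
  ultimately show False by linarith
qed

lemma neighbour_in_graph_on: "graph_on V E \<Longrightarrow> {v, u} \<in> E \<Longrightarrow> u \<noteq> v \<and> u \<in> V \<and> v \<in> V"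
proof -
  assume "graph_on V E" "{v, u} \<in> E"
  then have "card {v, u} = 2" "{v, u} \<subseteq> V" unfolding graph_on_def by auto
  then show ?thesis by (cases "u = v") auto
qed

lemma star_eq_neighbours:
  "graph_on V E \<Longrightarrow> {e\<in>E. v \<in> e} = (\<lambda>u. {v, u}) ` {u. {v, u} \<in> E}"
  unfolding graph_on_def by (auto dest!: edge_at_vertex)

lemma vertex_degree_eq_card_neighbours:
  assumes "graph_on V E"
  shows "vertex_degree E v = card {u. {v, u} \<in> E}"
proof -
  have "inj_on (\<lambda>u. {v, u}) {u. {v, u} \<in> E}"
    using neighbour_in_graph_on[OF assms] by (auto simp: inj_on_def doubleton_eq_iff)
  then show ?thesis
    unfolding vertex_degree_def star_eq_neighbours[OF assms] by (simp add: card_image)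
qed

section \<open>Choosing a new point\<close>

lemma sign_product_perturb:
  fixes a b s t :: real
  assumes "\<bar>s\<bar> < \<bar>a\<bar>" "\<bar>t\<bar> < \<bar>b\<bar>"
  shows "((a + s) * (b + t) > 0 \<longleftrightarrow> a * b > 0) \<and> (a + s) * (b + t) \<noteq> 0"
  using assms by (auto simp: zero_less_mult_iff abs_if split: if_splits)

text \<open>The sign \<open>s = \<plusminus>1\<close> chooses whether the new point is concordant or discordant with
  \<open>(p, q)\<close>.\<close>
lemma exists_point_near_preserving_signs:
  fixes f g :: "'a \<Rightarrow> real"
  assumes "finite F" "finite G" "finite W" "\<forall>u\<in>W. f u \<noteq> p \<and> g u \<noteq> q" "s = 1 \<or> s = -1"
  shows "\<exists>x y. x \<notin> F \<and> y \<notin> G \<and> s * ((x - p) * (y - q)) > 0 \<and>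
    (\<forall>u\<in>W. ((x - f u) * (y - g u) > 0 \<longleftrightarrow> (p - f u) * (q - g u) > 0) \<and> (x - f u) * (y - g u) \<noteq> 0)"
proof -
  define D where "D = insert 1 ((\<lambda>u. \<bar>p - f u\<bar>) ` W \<union> (\<lambda>u. \<bar>q - g u\<bar>) ` W)"
  have "finite D" "\<forall>t\<in>D. t > 0" using assms(3,4) unfolding D_def by auto
  then have d: "Min D > 0" "\<forall>u\<in>W. Min D \<le> \<bar>p - f u\<bar> \<and> Min D \<le> \<bar>q - g u\<bar>"
    unfolding D_def by auto
  have "infinite ({0<..<Min D} - ((\<lambda>t. t - p) ` F \<union> (\<lambda>t. s * (t - q)) ` G))"
    using d(1) assms(1,2) by (intro Diff_infinite_finite) auto
  then obtain \<delta> where "\<delta> \<in> {0<..<Min D} - ((\<lambda>t. t - p) ` F \<union> (\<lambda>t. s * (t - q)) ` G)"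
    using infinite_imp_nonempty by blast
  then have \<delta>: "0 < \<delta>" "\<delta> < Min D" "\<delta> \<notin> (\<lambda>t. t - p) ` F" "\<delta> \<notin> (\<lambda>t. s * (t - q)) ` G"
    by auto
  have ss: "s * s = 1" using assms(5) by auto
  have "p + \<delta> \<notin> F" using \<delta>(3) image_eqI[of \<delta> "\<lambda>t. t - p" "p + \<delta>" F] by auto
  moreover have "q + s * \<delta> \<notin> G"
  proof
    assume "q + s * \<delta> \<in> G"
    then have "s * ((q + s * \<delta>) - q) \<in> (\<lambda>t. s * (t - q)) ` G" by blast
    then show False using \<delta>(4) ss by (simp add: algebra_simps)
  qed
  moreover have "s * ((p + \<delta> - p) * (q + s * \<delta> - q)) > 0"
    using ss \<delta>(1) by (simp add: algebra_simps)
  moreover have "((p + \<delta> - f u) * (q + s * \<delta> - g u) > 0 \<longleftrightarrow> (p - f u) * (q - g u) > 0) \<and>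
      (p + \<delta> - f u) * (q + s * \<delta> - g u) \<noteq> 0" if u: "u \<in> W" for u
  proof -
    have "\<bar>\<delta>\<bar> < \<bar>p - f u\<bar>" "\<bar>s * \<delta>\<bar> < \<bar>q - g u\<bar>"
      using d(2) u \<delta>(1,2) assms(5) by auto
    moreover have "p - f u \<noteq> 0" "q - g u \<noteq> 0" using assms(4) u by auto
    ultimately show ?thesis
      using sign_product_perturb[of \<delta> "p - f u" "s * \<delta>" "q - g u"] by (simp add: algebra_simps)
  qed
  ultimately show ?thesis by (intro exI[of _ "p + \<delta>"] exI[of _ "q + s * \<delta>"]) blast
qed

lemma exists_point_concordant_discordant:
  fixes f g :: "'a \<Rightarrow> real"
  assumes "finite F" "finite G" "f a \<noteq> f b" "g a \<noteq> g b"
  shows "\<exists>x y. x \<notin> F \<and> y \<notin> G \<and> (x - f a) * (y - g a) > 0 \<and> (x - f b) * (y - g b) < 0"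
proof (cases "(f a - f b) * (g a - g b) < 0")
  case True
  obtain x y where "x \<notin> F" "y \<notin> G" "1 * ((x - f a) * (y - g a)) > 0"
    "((x - f b) * (y - g b) > 0 \<longleftrightarrow> (f a - f b) * (g a - g b) > 0) \<and> (x - f b) * (y - g b) \<noteq> 0"
    using exists_point_near_preserving_signs[of F G "{b}" f "f a" g "g a" 1] assms by auto
  with True show ?thesis by (auto simp: not_less order_le_less)
next
  case False
  have "(f a - f b) * (g a - g b) \<noteq> 0" using assms(3,4) by simp
  with False have "(f b - f a) * (g b - g a) > 0"
    by (metis linorder_neqE_linordered_idom minus_diff_eq mult_minus_left mult_minus_right minus_mult_minus)
  moreover obtain x y where "x \<notin> F" "y \<notin> G" "(-1) * ((x - f b) * (y - g b)) > 0"
    "((x - f a) * (y - g a) > 0 \<longleftrightarrow> (f b - f a) * (g b - g a) > 0)"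
    using exists_point_near_preserving_signs[of F G "{a}" f "f b" g "g b" "-1"] assms by auto
  ultimately show ?thesis by (auto simp: mult_less_0_iff zero_less_mult_iff)
qed

text \<open>The new point is placed next to a pivot among \<open>a\<close>, \<open>b\<close>, \<open>c\<close> whose relations to the other
  two already have the required signs, or next to \<open>c\<close> on the discordant side if all three pairs
  are concordant.\<close>
lemma exists_point_concordant_concordant_discordant:
  fixes f g :: "'a \<Rightarrow> real"
  assumes "finite F" "finite G" "f a \<noteq> f b" "f a \<noteq> f c" "f b \<noteq> f c"
    "g a \<noteq> g b" "g a \<noteq> g c" "g b \<noteq> g c" "(f a - f b) * (g a - g b) > 0"
  shows "\<exists>x y. x \<notin> F \<and> y \<notin> G \<and> (x - f a) * (y - g a) > 0 \<and> (x - f b) * (y - g b) > 0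
    \<and> (x - f c) * (y - g c) < 0"
proof -
  have sym: "(f u - f w) * (g u - g w) = (f w - f u) * (g w - g u)" for u w
    by (simp add: algebra_simps)
  have sign: "(f u - f w) * (g u - g w) < 0 \<or> (f u - f w) * (g u - g w) > 0"
    if "f u \<noteq> f w" "g u \<noteq> g w" for u w
  proof -
    have "(f u - f w) * (g u - g w) \<noteq> 0" using that by simp
    then show ?thesis by linarith
  qed
  consider "(f a - f c) * (g a - g c) < 0"
    | "(f a - f c) * (g a - g c) > 0" "(f b - f c) * (g b - g c) < 0"
    | "(f a - f c) * (g a - g c) > 0" "(f b - f c) * (g b - g c) > 0"
    using sign assms(4,5,7,8) by blast
  then show ?thesis
  proof cases
    case 1
    obtain x y where "x \<notin> F" "y \<notin> G" "1 * ((x - f a) * (y - g a)) > 0"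
      "\<forall>u\<in>{b, c}. ((x - f u) * (y - g u) > 0 \<longleftrightarrow> (f a - f u) * (g a - g u) > 0) \<and>
        (x - f u) * (y - g u) \<noteq> 0"
      using exists_point_near_preserving_signs[of F G "{b, c}" f "f a" g "g a" 1] assms by auto
    with 1 assms(9) show ?thesis by (auto simp: not_less order_le_less)
  next
    case 2
    obtain x y where "x \<notin> F" "y \<notin> G" "1 * ((x - f b) * (y - g b)) > 0"
      "\<forall>u\<in>{a, c}. ((x - f u) * (y - g u) > 0 \<longleftrightarrow> (f b - f u) * (g b - g u) > 0) \<and>
        (x - f u) * (y - g u) \<noteq> 0"
      using exists_point_near_preserving_signs[of F G "{a, c}" f "f b" g "g b" 1] assms by auto
    with 2 assms(9) sym[of b a] show ?thesis by (auto simp: not_less order_le_less)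
  next
    case 3
    obtain x y where "x \<notin> F" "y \<notin> G" "(-1) * ((x - f c) * (y - g c)) > 0"
      "\<forall>u\<in>{a, b}. ((x - f u) * (y - g u) > 0 \<longleftrightarrow> (f c - f u) * (g c - g u) > 0)"
      using exists_point_near_preserving_signs[of F G "{a, b}" f "f c" g "g c" "-1"] assms by auto
    with 3 sym[of c a] sym[of c b] show ?thesis by (auto simp: mult_less_0_iff zero_less_mult_iff)
  qed
qed

section \<open>Forest realizations\<close>

definition concordant :: "('a \<Rightarrow> real) \<Rightarrow> ('a \<Rightarrow> real) \<Rightarrow> 'a set \<Rightarrow> bool" where
  "concordant f g e \<longleftrightarrow> (\<forall>u\<in>e. \<forall>w\<in>e. u \<noteq> w \<longrightarrow> (f u - f w) * (g u - g w) > 0)"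

definition forest_realization :: "'a set \<Rightarrow> 'a set set \<Rightarrow> ('a \<Rightarrow> real) \<Rightarrow> ('a \<Rightarrow> real) \<Rightarrow> bool" where
  "forest_realization V E f g \<longleftrightarrow> inj_on f V \<and> inj_on g V \<and>
     forest {e\<in>E. concordant f g e} \<and> forest {e\<in>E. \<not> concordant f g e}"

lemma concordant_pair: "u \<noteq> w \<Longrightarrow> concordant f g {u, w} \<longleftrightarrow> (f u - f w) * (g u - g w) > 0"
  unfolding concordant_def by (auto simp: algebra_simps)

lemma concordant_cong: "\<forall>u\<in>e. f u = f' u \<and> g u = g' u \<Longrightarrow> concordant f g e = concordant f' g' e"
  unfolding concordant_def by auto

lemma concordant_uminus:
  assumes "u \<noteq> w" "f u \<noteq> f w" "g u \<noteq> g w"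
  shows "concordant f (\<lambda>v. - g v) {u, w} \<longleftrightarrow> \<not> concordant f g {u, w}"
proof -
  define d where "d = (f u - f w) * (g u - g w)"
  have "d \<noteq> 0" using assms(2,3) unfolding d_def by simp
  moreover have "concordant f (\<lambda>v. - g v) {u, w} \<longleftrightarrow> - d > 0"
    using assms(1) unfolding d_def by (simp add: concordant_pair algebra_simps)
  moreover have "concordant f g {u, w} \<longleftrightarrow> d > 0"
    using assms(1) unfolding d_def by (simp add: concordant_pair)
  ultimately show ?thesis by auto
qed

lemma forest_realization_uminus:
  assumes "graph_on V E" "forest_realization V E f g"
  shows "forest_realization V E f (\<lambda>v. - g v)"
proof -
  have inj: "inj_on f V" "inj_on g V" using assms(2) unfolding forest_realization_def by auto
  have swap: "concordant f (\<lambda>v. - g v) e \<longleftrightarrow> \<not> concordant f g e" if e: "e \<in> E" for e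
  proof -
    obtain u w where "e = {u, w}" "u \<noteq> w" "u \<in> V" "w \<in> V"
      using graph_on_edgeE[OF assms(1) e] by blast
    then show ?thesis using concordant_uminus inj by (metis inj_on_contraD)
  qed
  have "inj_on (\<lambda>v. - g v) V" using inj(2) by (simp add: inj_on_def)
  moreover have "{e\<in>E. concordant f (\<lambda>v. - g v) e} = {e\<in>E. \<not> concordant f g e}"
    "{e\<in>E. \<not> concordant f (\<lambda>v. - g v) e} = {e\<in>E. concordant f g e}"
    using swap by auto
  ultimately show ?thesis using assms(2) inj(1) unfolding forest_realization_def by simp
qed

lemma forest_realization_subset:
  assumes "forest_realization V E f g" "E' \<subseteq> E" "finite E"
  shows "forest_realization V E' f g"
  using assms kk_sparse_mono[of 1 "{e\<in>E. concordant f g e}" "{e\<in>E'. concordant f g e}"]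
    kk_sparse_mono[of 1 "{e\<in>E. \<not> concordant f g e}" "{e\<in>E'. \<not> concordant f g e}"]
  unfolding forest_realization_def by auto

lemma inj_on_fun_upd_Diff:
  assumes "inj_on f (V - {v})" "x \<notin> f ` (V - {v})" "v \<in> V"
  shows "inj_on (f(v := x)) V"
proof -
  have "inj_on (f(v := x)) (V - {v})" using assms(1,2) by (rule inj_on_fun_updI)
  moreover have "(f(v := x)) v \<notin> (f(v := x)) ` (V - {v})" using assms(2) by simp
  ultimately have "inj_on (f(v := x)) (insert v (V - {v}))" unfolding inj_on_insert Diff_idemp by blast
  moreover have "insert v (V - {v}) = V" using assms(3) by auto
  ultimately show ?thesis by simp
qed

lemma forest_realization_add_vertex:
  assumes "v \<in> V" "forest_realization (V - {v}) {e\<in>E. v \<notin> e} f g"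
    and "x \<notin> f ` (V - {v})" "y \<notin> g ` (V - {v})"
    and "forest ({e\<in>E. v \<notin> e \<and> concordant f g e} \<union>
                   {e\<in>E. v \<in> e \<and> concordant (f(v := x)) (g(v := y)) e})"
    and "forest ({e\<in>E. v \<notin> e \<and> \<not> concordant f g e} \<union>
                   {e\<in>E. v \<in> e \<and> \<not> concordant (f(v := x)) (g(v := y)) e})"
  shows "forest_realization V E (f(v := x)) (g(v := y))"
proof -
  have "inj_on (f(v := x)) V" "inj_on (g(v := y)) V"
    using assms(1-4) unfolding forest_realization_def by (auto intro: inj_on_fun_upd_Diff)
  moreover have "concordant (f(v := x)) (g(v := y)) e = concordant f g e" if "v \<notin> e" for e
    using that by (intro concordant_cong) auto
  then have "{e\<in>E. concordant (f(v := x)) (g(v := y)) e} =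
      {e\<in>E. v \<notin> e \<and> concordant f g e} \<union> {e\<in>E. v \<in> e \<and> concordant (f(v := x)) (g(v := y)) e}"
    "{e\<in>E. \<not> concordant (f(v := x)) (g(v := y)) e} =
      {e\<in>E. v \<notin> e \<and> \<not> concordant f g e} \<union> {e\<in>E. v \<in> e \<and> \<not> concordant (f(v := x)) (g(v := y)) e}"
    by blast+
  ultimately show ?thesis using assms(5,6) unfolding forest_realization_def by simp
qed

lemma forest_realization_add_pendants:
  assumes E: "graph_on V E" and v: "v \<in> V"
    and r: "forest_realization (V - {v}) {e\<in>E. v \<notin> e} f g"
    and xy: "x \<notin> f ` (V - {v})" "y \<notin> g ` (V - {v})"
    and "card {e\<in>E. v \<in> e \<and> concordant (f(v := x)) (g(v := y)) e} \<le> 1"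
    and "card {e\<in>E. v \<in> e \<and> \<not> concordant (f(v := x)) (g(v := y)) e} \<le> 1"
  shows "forest_realization V E (f(v := x)) (g(v := y))"
proof (rule forest_realization_add_vertex[OF v r xy])
  have fin: "finite E" using graph_on_finite_edges[OF E] .
  have star: "\<forall>e\<in>{e\<in>E. v \<in> e \<and> P e}. v \<in> e \<and> card e = 2" for P
    using E unfolding graph_on_def by auto
  have "{e\<in>{e\<in>E. v \<notin> e}. P e} = {e\<in>E. v \<notin> e \<and> P e}" for P by blast
  then have old: "forest {e\<in>E. v \<notin> e \<and> concordant f g e}" "forest {e\<in>E. v \<notin> e \<and> \<not> concordant f g e}"
    using r unfolding forest_realization_def by simp_all
  show "forest ({e\<in>E. v \<notin> e \<and> concordant f g e} \<union>
      {e\<in>E. v \<in> e \<and> concordant (f(v := x)) (g(v := y)) e})"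
    by (rule forest_insert_pendant_at_most_one[OF old(1) _ _ star]) (use assms(6) fin in auto)
  show "forest ({e\<in>E. v \<notin> e \<and> \<not> concordant f g e} \<union>
      {e\<in>E. v \<in> e \<and> \<not> concordant (f(v := x)) (g(v := y)) e})"
    by (rule forest_insert_pendant_at_most_one[OF old(2) _ _ star]) (use assms(7) fin in auto)
qed

lemma ex_real_not_in_finite: "finite (A :: real set) \<Longrightarrow> \<exists>x. x \<notin> A"
  using ex_new_if_finite infinite_UNIV_char_0 by blast

lemma exists_position_separating_two_edges:
  assumes E: "graph_on V E" and r: "forest_realization (V - {v}) {e\<in>E. v \<notin> e} f g"
    and star: "{e\<in>E. v \<in> e} = {{v, a}, {v, b}}" "a \<noteq> b"
  obtains x y where "x \<notin> f ` (V - {v})" "y \<notin> g ` (V - {v})"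
    "card {e\<in>E. v \<in> e \<and> concordant (f(v := x)) (g(v := y)) e} \<le> 1"
    "card {e\<in>E. v \<in> e \<and> \<not> concordant (f(v := x)) (g(v := y)) e} \<le> 1"
proof -
  let ?V' = "V - {v}"
  have fin: "finite (f ` ?V')" "finite (g ` ?V')" using E unfolding graph_on_def by auto
  have "{v, a} \<in> E" "{v, b} \<in> E" using star(1) by blast+
  then have "a \<in> ?V'" "b \<in> ?V'"
    using neighbour_in_graph_on[OF E, of v a] neighbour_in_graph_on[OF E, of v b] by simp_all
  moreover have "inj_on f ?V'" "inj_on g ?V'" using r unfolding forest_realization_def by simp_all
  ultimately have ne: "f a \<noteq> f b" "g a \<noteq> g b" using star(2) by (simp_all add: inj_on_eq_iff)
  obtain x y where xy: "x \<notin> f ` ?V'" "y \<notin> g ` ?V'"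
    "(x - f a) * (y - g a) > 0" "(x - f b) * (y - g b) < 0"
    using exists_point_concordant_discordant[OF fin ne] by blast
  moreover have "a \<noteq> v" "b \<noteq> v" using \<open>a \<in> ?V'\<close> \<open>b \<in> ?V'\<close> by auto
  ultimately have conc: "concordant (f(v := x)) (g(v := y)) {v, a}"
    "\<not> concordant (f(v := x)) (g(v := y)) {v, b}"
    by (simp_all add: concordant_pair)
  have split: "{e\<in>E. v \<in> e \<and> P e} = {e\<in>{{v, a}, {v, b}}. P e}" for P
    unfolding star(1)[symmetric] by blast
  have "card {e\<in>E. v \<in> e \<and> concordant (f(v := x)) (g(v := y)) e} \<le> card {{v, a}}"
    "card {e\<in>E. v \<in> e \<and> \<not> concordant (f(v := x)) (g(v := y)) e} \<le> card {{v, b}}"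
    unfolding split using conc by (intro card_mono; auto)+
  then show ?thesis using that xy(1,2) by simp
qed

text \<open>A vertex of degree at most two is placed so that its edges get different colours.\<close>
lemma forest_realization_add_low_degree_vertex:
  assumes E: "graph_on V E" and v: "v \<in> V" "vertex_degree E v \<le> 2"
    and r: "forest_realization (V - {v}) {e\<in>E. v \<notin> e} f g"
  shows "\<exists>f g. forest_realization V E f g"
proof -
  let ?V' = "V - {v}"
  have fin: "finite (f ` ?V')" "finite (g ` ?V')" "finite E"
    using E graph_on_finite_edges unfolding graph_on_def by auto
  obtain x y where "x \<notin> f ` ?V'" "y \<notin> g ` ?V'"
    and "card {e\<in>E. v \<in> e \<and> concordant (f(v := x)) (g(v := y)) e} \<le> 1"
    and "card {e\<in>E. v \<in> e \<and> \<not> concordant (f(v := x)) (g(v := y)) e} \<le> 1"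
  proof (cases "vertex_degree E v \<le> 1")
    case True
    obtain x y where "x \<notin> f ` ?V'" "y \<notin> g ` ?V'" using ex_real_not_in_finite fin by meson
    moreover have "card {e\<in>E. v \<in> e \<and> P e} \<le> vertex_degree E v" for P
      unfolding vertex_degree_def using fin(3) by (intro card_mono) auto
    ultimately show ?thesis using that True by (meson le_trans)
  next
    case False
    then have "card {u. {v, u} \<in> E} = 2"
      using v(2) vertex_degree_eq_card_neighbours[OF E] by simp
    then obtain a b where ab: "{u. {v, u} \<in> E} = {a, b}" "a \<noteq> b" by (meson card_2_iff)
    then have "{e\<in>E. v \<in> e} = {{v, a}, {v, b}}" using star_eq_neighbours[OF E] by auto
    then show ?thesis using that exists_position_separating_two_edges[OF E r _ ab(2)] by blast
  qed
  then show ?thesis using forest_realization_add_pendants[OF E v(1) r] by blast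
qed

definition tight_set :: "'a set set \<Rightarrow> 'a set \<Rightarrow> bool" where
  "tight_set E Y \<longleftrightarrow> 2 \<le> card Y \<and> induced_edges E Y + 2 = 2 * card Y"

text \<open>Only sets avoiding \<open>v\<close> and containing \<open>a\<close> and \<open>b\<close> gain an edge, and none of them is tight.\<close>
lemma kk_sparse_one_reduction:
  assumes E: "graph_on V E" "kk_sparse 2 E" and v: "v \<in> V"
    and ab: "a \<in> V - {v}" "b \<in> V - {v}" "a \<noteq> b" "{a, b} \<notin> E"
    and no_tight: "\<forall>Y\<subset>V. \<not> tight_set E Y"
  shows "kk_sparse 2 (insert {a, b} {e\<in>E. v \<notin> e})"
  unfolding kk_sparse_def
proof (intro allI impI)
  fix Y :: "'a set" assume Y: "finite Y \<and> Y \<noteq> {}"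
  define E' where "E' = {e\<in>E. v \<notin> e}"
  have fin: "finite E" "finite E'" using graph_on_finite_edges[OF E(1)] E'_def by auto
  have count: "induced_edges (insert {a, b} E') Y = induced_edges E' Y + (if {a, b} \<subseteq> Y then 1 else 0)"
    using ab(4) fin(2) unfolding E'_def by (intro induced_edges_insert) auto
  show "induced_edges (insert {a, b} {e\<in>E. v \<notin> e}) Y + 2 \<le> 2 * card Y"
  proof (cases "{a, b} \<subseteq> Y")
    case False
    then show ?thesis
      using count induced_edges_mono[of E' E Y] fin kk_sparseD[OF E(2)] Y unfolding E'_def by force
  next
    case True
    define Z where "Z = Y \<inter> (V - {v})"
    have "induced_edges E' Y = induced_edges E' Z"
      unfolding Z_def using E(1) unfolding E'_def graph_on_def by (intro induced_edges_restrict) auto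
    also have "\<dots> = induced_edges E Z"
      unfolding induced_edges_def E'_def Z_def by (rule arg_cong[where f = card]) auto
    finally have E'Z: "induced_edges E' Y = induced_edges E Z" .
    have "{a, b} \<subseteq> Z" "finite Z" using True ab Y unfolding Z_def by auto
    then have "2 \<le> card Z" using ab(3) card_mono[of Z "{a, b}"] by simp
    moreover have "Z \<subset> V" using v unfolding Z_def by auto
    ultimately have "induced_edges E Z + 2 \<noteq> 2 * card Z" using no_tight unfolding tight_set_def by blast
    moreover have "induced_edges E Z + 2 \<le> 2 * card Z"
      using kk_sparseD[OF E(2)] \<open>finite Z\<close> \<open>{a, b} \<subseteq> Z\<close> by blast
    moreover have "card Z \<le> card Y" using Y unfolding Z_def by (simp add: card_mono)
    ultimately show ?thesis using count True E'Z unfolding E'_def by simp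
  qed
qed

lemma one_extension_colour_classes:
  assumes star: "{e\<in>E. v \<in> e} = {{v, a}, {v, b}, {v, c}}"
    and distinct: "a \<noteq> v" "b \<noteq> v" "c \<noteq> v" "a \<noteq> b" "a \<noteq> c" "b \<noteq> c" and ab: "{a, b} \<notin> E"
    and conc: "concordant f g {a, b}"
    and xy: "(x - f a) * (y - g a) > 0" "(x - f b) * (y - g b) > 0" "(x - f c) * (y - g c) < 0"
  defines "H \<equiv> insert {a, b} {e\<in>E. v \<notin> e}"
  shows "{e\<in>E. v \<notin> e \<and> concordant f g e} \<union> {e\<in>E. v \<in> e \<and> concordant (f(v := x)) (g(v := y)) e}
      = insert {v, a} (insert {v, b} ({e\<in>H. concordant f g e} - {{a, b}}))"
    and "{e\<in>E. v \<notin> e \<and> \<not> concordant f g e} \<union> {e\<in>E. v \<in> e \<and> \<not> concordant (f(v := x)) (g(v := y)) e}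
      = insert {v, c} {e\<in>H. \<not> concordant f g e}"
proof -
  have split: "{e\<in>E. v \<in> e \<and> P e} = {e\<in>{{v, a}, {v, b}, {v, c}}. P e}" for P
    unfolding star[symmetric] by blast
  have "concordant (f(v := x)) (g(v := y)) {v, a}" "concordant (f(v := x)) (g(v := y)) {v, b}"
    "\<not> concordant (f(v := x)) (g(v := y)) {v, c}"
    using xy distinct by (simp_all add: concordant_pair)
  then have "{e\<in>E. v \<in> e \<and> concordant (f(v := x)) (g(v := y)) e} = {{v, a}, {v, b}}"
    "{e\<in>E. v \<in> e \<and> \<not> concordant (f(v := x)) (g(v := y)) e} = {{v, c}}"
    unfolding split by auto
  moreover have "{e\<in>E. v \<notin> e \<and> concordant f g e} = {e\<in>H. concordant f g e} - {{a, b}}"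
    "{e\<in>E. v \<notin> e \<and> \<not> concordant f g e} = {e\<in>H. \<not> concordant f g e}"
    using ab conc unfolding H_def by auto
  ultimately show "{e\<in>E. v \<notin> e \<and> concordant f g e} \<union> {e\<in>E. v \<in> e \<and> concordant (f(v := x)) (g(v := y)) e}
      = insert {v, a} (insert {v, b} ({e\<in>H. concordant f g e} - {{a, b}}))"
    "{e\<in>E. v \<notin> e \<and> \<not> concordant f g e} \<union> {e\<in>E. v \<in> e \<and> \<not> concordant (f(v := x)) (g(v := y)) e}
      = insert {v, c} {e\<in>H. \<not> concordant f g e}"
    by auto
qed

text \<open>The new vertex subdivides the concordant edge \<open>{a, b}\<close> and hangs off \<open>c\<close> in the discordant forest.\<close>
lemma forest_realization_one_extension_concordant:
  assumes E: "graph_on V E" and v: "v \<in> V"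
    and star: "{e\<in>E. v \<in> e} = {{v, a}, {v, b}, {v, c}}"
    and distinct: "a \<noteq> v" "b \<noteq> v" "c \<noteq> v" "a \<noteq> b" "a \<noteq> c" "b \<noteq> c" and ab: "{a, b} \<notin> E"
    and r: "forest_realization (V - {v}) (insert {a, b} {e\<in>E. v \<notin> e}) f g"
    and conc: "concordant f g {a, b}"
  shows "\<exists>f g. forest_realization V E f g"
proof -
  define H where "H = insert {a, b} {e\<in>E. v \<notin> e}"
  have fin: "finite H" "finite (f ` (V - {v}))" "finite (g ` (V - {v}))"
    using graph_on_finite_edges[OF E] E unfolding H_def graph_on_def by auto
  have abc: "a \<in> V - {v}" "b \<in> V - {v}" "c \<in> V - {v}"
    using star neighbour_in_graph_on[OF E] distinct by blast+
  have inj: "inj_on f (V - {v})" "inj_on g (V - {v})" and forests: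
    "forest {e\<in>H. concordant f g e}" "forest {e\<in>H. \<not> concordant f g e}"
    using r unfolding forest_realization_def H_def by auto
  have r': "forest_realization (V - {v}) {e\<in>E. v \<notin> e} f g"
    using forest_realization_subset[OF r, of "{e\<in>E. v \<notin> e}"] fin(1) unfolding H_def by blast
  obtain x y where xy: "x \<notin> f ` (V - {v})" "y \<notin> g ` (V - {v})"
    "(x - f a) * (y - g a) > 0" "(x - f b) * (y - g b) > 0" "(x - f c) * (y - g c) < 0"
  proof -
    have general: "f a \<noteq> f b" "f a \<noteq> f c" "f b \<noteq> f c" "g a \<noteq> g b" "g a \<noteq> g c" "g b \<noteq> g c"
      "(f a - f b) * (g a - g b) > 0"
      using inj abc distinct conc by (simp_all add: inj_on_eq_iff concordant_pair)
    show ?thesis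
      using that exists_point_concordant_concordant_discordant[OF fin(2,3) general] by blast
  qed
  have colours: "{e\<in>E. v \<notin> e \<and> concordant f g e} \<union> {e\<in>E. v \<in> e \<and> concordant (f(v := x)) (g(v := y)) e}
      = insert {v, a} (insert {v, b} ({e\<in>H. concordant f g e} - {{a, b}}))"
    "{e\<in>E. v \<notin> e \<and> \<not> concordant f g e} \<union> {e\<in>E. v \<in> e \<and> \<not> concordant (f(v := x)) (g(v := y)) e}
      = insert {v, c} {e\<in>H. \<not> concordant f g e}"
    unfolding H_def by (rule one_extension_colour_classes[OF star distinct ab conc xy(3-5)])+
  have "forest (insert {v, a} (insert {v, b} ({e\<in>H. concordant f g e} - {{a, b}})))"
    using forests(1) fin(1) conc distinct unfolding H_def by (intro forest_subdivide) auto
  moreover have "forest (insert {v, c} {e\<in>H. \<not> concordant f g e})"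
    using forests(2) fin(1) distinct unfolding H_def by (intro forest_insert_pendant) auto
  ultimately have "forest_realization V E (f(v := x)) (g(v := y))"
    using forest_realization_add_vertex[OF v r' xy(1,2)] unfolding colours by blast
  then show ?thesis by blast
qed

lemma forest_realization_one_extension:
  assumes E: "graph_on V E" and v: "v \<in> V"
    and star: "{e\<in>E. v \<in> e} = {{v, a}, {v, b}, {v, c}}"
    and distinct: "a \<noteq> v" "b \<noteq> v" "c \<noteq> v" "a \<noteq> b" "a \<noteq> c" "b \<noteq> c" and ab: "{a, b} \<notin> E"
    and r: "forest_realization (V - {v}) (insert {a, b} {e\<in>E. v \<notin> e}) f g"
  shows "\<exists>f g. forest_realization V E f g"
proof (cases "concordant f g {a, b}")
  case True
  then show ?thesis using forest_realization_one_extension_concordant[OF assms] by blast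
next
  case False
  have "a \<in> V" "b \<in> V" using star neighbour_in_graph_on[OF E] by blast+
  then have "graph_on (V - {v}) (insert {a, b} {e\<in>E. v \<notin> e})"
    using graph_on_delete_vertex[OF E, of v] distinct unfolding graph_on_def by auto
  then have "forest_realization (V - {v}) (insert {a, b} {e\<in>E. v \<notin> e}) f (\<lambda>u. - g u)"
    using r by (rule forest_realization_uminus)
  moreover have "inj_on f (V - {v})" "inj_on g (V - {v})"
    using r unfolding forest_realization_def by simp_all
  then have "f a \<noteq> f b" "g a \<noteq> g b"
    using \<open>a \<in> V\<close> \<open>b \<in> V\<close> distinct by (simp_all add: inj_on_eq_iff)
  then have "concordant f (\<lambda>u. - g u) {a, b}" using concordant_uminus[OF distinct(4)] False by simp
  ultimately show ?thesis
    using forest_realization_one_extension_concordant[OF E v star distinct ab] by blast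
qed

text \<open>The coordinates split \<open>K\<^sub>4\<close> into the paths \<open>a v c b\<close> (concordant) and \<open>v b a c\<close>.\<close>
lemma forest_realization_K4:
  assumes V: "V = {v, a, b, c}" and distinct: "a \<noteq> v" "b \<noteq> v" "c \<noteq> v" "a \<noteq> b" "a \<noteq> c" "b \<noteq> c"
    and E: "graph_on V E"
  shows "\<exists>f g. forest_realization V E f g"
proof -
  define f :: "'a \<Rightarrow> real" where "f u = (if u = v then 1 else if u = a then 2 else if u = b then 3 else 4)" for u
  define g :: "'a \<Rightarrow> real" where "g u = (if u = v then 2 else if u = a then 4 else if u = b then 1 else 3)" for u
  have fv: "f v = 1" "f a = 2" "f b = 3" "f c = 4" "g v = 2" "g a = 4" "g b = 1" "g c = 3"
    using distinct unfolding f_def g_def by auto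
  have "E \<subseteq> {{v, a}, {v, b}, {v, c}, {a, b}, {a, c}, {b, c}}"
  proof
    fix e assume "e \<in> E"
    then obtain x y where "e = {x, y}" "x \<noteq> y" "x \<in> V" "y \<in> V" by (rule graph_on_edgeE[OF E])
    then show "e \<in> {{v, a}, {v, b}, {v, c}, {a, b}, {a, c}, {b, c}}" using V by (auto simp: insert_commute)
  qed
  moreover have "concordant f g {v, a}" "concordant f g {v, c}" "concordant f g {b, c}"
    "\<not> concordant f g {v, b}" "\<not> concordant f g {a, b}" "\<not> concordant f g {a, c}"
    using fv distinct by (simp_all add: concordant_pair)
  ultimately have "{e\<in>E. concordant f g e} \<subseteq> {{a, v}, {v, c}, {b, c}}"
    "{e\<in>E. \<not> concordant f g e} \<subseteq> {{v, b}, {b, a}, {a, c}}"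
    by (auto simp: insert_commute)
  moreover have "forest {{a, v}, {v, c}, {b, c}}" "forest {{v, b}, {b, a}, {a, c}}"
    using distinct by (intro forest_insert_pendant kk_sparse_empty; simp)+
  moreover have "inj_on f V" "inj_on g V" unfolding V using fv distinct by (auto simp: inj_on_def)
  ultimately have "forest_realization V E f g"
    unfolding forest_realization_def by (meson finite.emptyI finite.insertI kk_sparse_mono)
  then show ?thesis by blast
qed

section \<open>Contracting a tight set\<close>

definition contract :: "'a set \<Rightarrow> 'a \<Rightarrow> 'a \<Rightarrow> 'a" where
  "contract X x0 u = (if u \<in> X then x0 else u)"

definition contract_edges :: "'a set \<Rightarrow> 'a \<Rightarrow> 'a set set \<Rightarrow> 'a set set" where
  "contract_edges X x0 E = (\<lambda>e. contract X x0 ` e) ` {e\<in>E. \<not> e \<subseteq> X}"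

lemma contract_image_edge:
  assumes E: "graph_on V E" "e \<in> E" "\<not> e \<subseteq> X" and x0: "x0 \<in> X"
  obtains "e \<inter> X = {}" "contract X x0 ` e = e" "x0 \<notin> e"
  | w y where "w \<in> V - X" "y \<in> X" "e = {w, y}" "contract X x0 ` e = {w, x0}"
proof -
  obtain u w where uw: "e = {u, w}" "u \<noteq> w" "u \<in> V" "w \<in> V" using graph_on_edgeE[OF E(1,2)] .
  consider "u \<notin> X" "w \<notin> X" | "u \<notin> X" "w \<in> X" | "u \<in> X" "w \<notin> X" using E(3) uw by auto
  then show ?thesis
  proof cases
    case 1
    then show ?thesis using that(1) uw x0 unfolding contract_def by auto
  next
    case 2
    then show ?thesis using that(2)[of u w] uw unfolding contract_def by auto
  next
    case 3
    then show ?thesis using that(2)[of w u] uw unfolding contract_def by (auto simp: insert_commute)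
  qed
qed

lemma graph_on_contract_edges:
  assumes E: "graph_on V E" and x0: "x0 \<in> X"
  shows "graph_on (insert x0 (V - X)) (contract_edges X x0 E)"
  unfolding graph_on_def
proof (intro conjI ballI)
  show "finite (insert x0 (V - X))" using E unfolding graph_on_def by simp
  fix e' assume "e' \<in> contract_edges X x0 E"
  then obtain e where e: "e \<in> E" "\<not> e \<subseteq> X" "e' = contract X x0 ` e" unfolding contract_edges_def by auto
  from E(1) e(1,2) x0 have "e' \<subseteq> insert x0 (V - X) \<and> card e' = 2"
  proof (cases rule: contract_image_edge)
    case 1
    moreover have "e \<subseteq> V" "card e = 2" using E e(1) unfolding graph_on_def by auto
    ultimately show ?thesis using e(3) by auto
  next
    case (2 w y)
    then have "w \<noteq> x0" using x0 by auto
    then show ?thesis using 2 e(3) by auto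
  qed
  then show "e' \<subseteq> insert x0 (V - X)" "card e' = 2" by simp_all
qed

text \<open>A vertex outside a maximal proper tight set \<open>X\<close> has at most one neighbour in \<open>X\<close>: two
  neighbours would make \<open>X \<union> {w}\<close> tight, contradicting maximality, or equal to \<open>V\<close>, forcing
  \<open>w\<close> to have degree two.\<close>
lemma tight_set_unique_neighbour:
  assumes E: "graph_on V E" "kk_sparse 2 E" and X: "X \<subset> V" "tight_set E X"
    and max: "\<forall>Y\<subset>V. tight_set E Y \<longrightarrow> card Y \<le> card X"
    and min_degree: "\<forall>w\<in>V. 3 \<le> vertex_degree E w"
    and w: "w \<in> V - X" and x: "x1 \<in> X" "x2 \<in> X" "{w, x1} \<in> E" "{w, x2} \<in> E"
  shows "x1 = x2"
proof (rule ccontr)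
  assume ne: "x1 \<noteq> x2"
  have fin: "finite V" "finite X" "finite E"
    using E graph_on_finite_edges finite_subset X(1) unfolding graph_on_def by blast+
  define Y where "Y = insert w X"
  have cY: "card Y = card X + 1" using Y_def fin w by simp
  have "insert {w, x1} (insert {w, x2} {e\<in>E. e \<subseteq> X}) \<subseteq> {e\<in>E. e \<subseteq> Y}"
    using x Y_def by auto
  moreover have "card (insert {w, x1} (insert {w, x2} {e\<in>E. e \<subseteq> X})) = induced_edges E X + 2"
    using ne w fin(3) unfolding induced_edges_def by (auto simp: doubleton_eq_iff)
  ultimately have "induced_edges E X + 2 \<le> induced_edges E Y"
    unfolding induced_edges_def by (metis (no_types, lifting) card_mono fin(3) finite_subset mem_Collect_eq subsetI)
  moreover have "induced_edges E Y + 2 \<le> 2 * card Y"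
    using kk_sparseD[OF E(2)] fin(2) Y_def by blast
  ultimately have tY: "tight_set E Y"
    using X(2) cY unfolding tight_set_def by linarith
  show False
  proof (cases "Y = V")
    case False
    then have "Y \<subset> V" using X(1) w unfolding Y_def by auto
    then have "card Y \<le> card X" using max tY by blast
    then show False using cY by simp
  next
    case True
    have "{e\<in>E. e \<subseteq> Y} = {e\<in>E. e \<subseteq> X} \<union> {e\<in>E. w \<in> e}"
      using Y_def w True E(1) unfolding graph_on_def by auto
    moreover have "{e\<in>E. e \<subseteq> X} \<inter> {e\<in>E. w \<in> e} = {}" using w by auto
    ultimately have "induced_edges E Y = induced_edges E X + vertex_degree E w"
      unfolding induced_edges_def vertex_degree_def using fin(3) by (simp add: card_Un_disjoint)
    then show False using tY X(2) cY min_degree w unfolding tight_set_def by fastforce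
  qed
qed

lemma inj_on_contract_image:
  assumes E: "graph_on V E" and x0: "x0 \<in> X"
    and unique: "\<forall>w\<in>V - X. \<forall>x1\<in>X. \<forall>x2\<in>X. {w, x1} \<in> E \<longrightarrow> {w, x2} \<in> E \<longrightarrow> x1 = x2"
  shows "inj_on (\<lambda>e. contract X x0 ` e) {e\<in>E. \<not> e \<subseteq> X}"
proof (rule inj_onI)
  fix e e' assume "e \<in> {e\<in>E. \<not> e \<subseteq> X}" "e' \<in> {e\<in>E. \<not> e \<subseteq> X}"
    and eq: "contract X x0 ` e = contract X x0 ` e'"
  then have e: "e \<in> E" "\<not> e \<subseteq> X" and e': "e' \<in> E" "\<not> e' \<subseteq> X" by auto
  from E e x0 show "e = e'"
  proof (cases rule: contract_image_edge)
    case 1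
    from E e' x0 show ?thesis
    proof (cases rule: contract_image_edge)
      case 1
      then show ?thesis using \<open>contract X x0 ` e = e\<close> eq by simp
    next
      case (2 w y)
      then show ?thesis using \<open>contract X x0 ` e = e\<close> \<open>x0 \<notin> e\<close> eq by auto
    qed
  next
    case (2 w y)
    note e_eq = this
    from E e' x0 show ?thesis
    proof (cases rule: contract_image_edge)
      case 1
      then show ?thesis using e_eq(4) eq by auto
    next
      case (2 w' y')
      then have "w = w'" using e_eq(1,4) x0 eq by (auto simp: doubleton_eq_iff)
      then show ?thesis using unique 2 e_eq e e' by auto
    qed
  qed
qed

lemma contract_image_eq: "x0 \<in> X \<Longrightarrow> Y \<inter> X \<noteq> {} \<Longrightarrow> contract X x0 ` Y = insert x0 (Y - X)"
  unfolding contract_def by (auto intro!: image_eqI)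

lemma contract_image_disjoint: "Y \<inter> X = {} \<Longrightarrow> contract X x0 ` Y = Y"
  unfolding contract_def by (auto intro!: image_eqI)

text \<open>A set \<open>Y\<close> spans its edges inside \<open>X\<close> within \<open>Y \<inter> X\<close>, and the images of its other edges
  within the contracted set, which has \<open>card (Y - X) + 1\<close> elements.\<close>
lemma forest_of_contraction:
  assumes P: "finite P" "\<forall>e\<in>P. e \<noteq> {}" and x0: "x0 \<in> X"
    and inj: "inj_on (\<lambda>e. contract X x0 ` e) {e\<in>P. \<not> e \<subseteq> X}"
    and inside: "forest {e\<in>P. e \<subseteq> X}" and outside: "forest (contract_edges X x0 P)"
  shows "forest P"
  unfolding kk_sparse_def
proof (intro allI impI)
  fix Y :: "'a set" assume Y: "finite Y \<and> Y \<noteq> {}"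
  define A where "A = {e\<in>P. e \<subseteq> X \<and> e \<subseteq> Y}"
  define B where "B = {e\<in>P. \<not> e \<subseteq> X \<and> e \<subseteq> Y}"
  have "{e\<in>P. e \<subseteq> Y} = A \<union> B" "A \<inter> B = {}" "finite A" "finite B"
    using P unfolding A_def B_def by auto
  then have split: "induced_edges P Y = card A + card B"
    unfolding induced_edges_def by (simp add: card_Un_disjoint)
  have "card B = card ((\<lambda>e. contract X x0 ` e) ` B)"
    using inj unfolding B_def by (intro card_image[symmetric] inj_on_subset[OF inj]) auto
  also have "\<dots> \<le> induced_edges (contract_edges X x0 P) (contract X x0 ` Y)"
    unfolding induced_edges_def contract_edges_def B_def using P by (intro card_mono) auto
  finally have cB: "card B \<le> induced_edges (contract_edges X x0 P) (contract X x0 ` Y)" .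
  have cA: "card A \<le> induced_edges {e\<in>P. e \<subseteq> X} (Y \<inter> X)"
    unfolding induced_edges_def A_def using P by (intro card_mono) auto
  show "induced_edges P Y + 1 \<le> 1 * card Y"
  proof (cases "Y \<inter> X = {}")
    case True
    then have "A = {}" using P unfolding A_def by blast
    then show ?thesis
      using split cB kk_sparseD[OF outside] Y contract_image_disjoint[OF True] by fastforce
  next
    case False
    have "card Y = card (Y - X) + card (Y \<inter> X)" using Y by (metis Int_commute add.commute card_Int_Diff)
    moreover have "card (contract X x0 ` Y) = card (Y - X) + 1"
      unfolding contract_image_eq[OF x0 False] using Y x0 by simp
    moreover have "induced_edges (contract_edges X x0 P) (contract X x0 ` Y) + 1 \<le> card (contract X x0 ` Y)"
      using kk_sparseD[OF outside] Y by auto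
    moreover have "induced_edges {e\<in>P. e \<subseteq> X} (Y \<inter> X) + 1 \<le> card (Y \<inter> X)"
      using kk_sparseD[OF inside] Y False by auto
    ultimately show ?thesis using split cA cB by linarith
  qed
qed

lemma contract_edges_avoiding:
  assumes "x0 \<in> X" "x0 \<notin> Y"
  shows "{e'\<in>contract_edges X x0 E. e' \<subseteq> Y} \<subseteq> {e\<in>E. e \<subseteq> Y}"
proof
  fix e' assume "e' \<in> {e'\<in>contract_edges X x0 E. e' \<subseteq> Y}"
  then obtain e where e: "e \<in> E" "e' = contract X x0 ` e" "contract X x0 ` e \<subseteq> Y"
    unfolding contract_edges_def by auto
  have "e \<inter> X = {}"
  proof (rule ccontr)
    assume "e \<inter> X \<noteq> {}"
    then obtain u where "u \<in> e" "u \<in> X" by blast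
    then have "x0 \<in> contract X x0 ` e" unfolding contract_def by force
    then show False using e(3) assms(2) by blast
  qed
  then have "contract X x0 ` e = e" by (rule contract_image_disjoint)
  then show "e' \<in> {e\<in>E. e \<subseteq> Y}" using e by simp
qed

lemma contract_edges_through:
  assumes "x0 \<in> X"
  shows "{e'\<in>contract_edges X x0 E. e' \<subseteq> Y} \<subseteq>
    (\<lambda>e. contract X x0 ` e) ` {e\<in>E. \<not> e \<subseteq> X \<and> e \<subseteq> (Y - {x0}) \<union> X}"
proof
  fix e' assume "e' \<in> {e'\<in>contract_edges X x0 E. e' \<subseteq> Y}"
  then obtain e where e: "e \<in> E" "\<not> e \<subseteq> X" "e' = contract X x0 ` e" "contract X x0 ` e \<subseteq> Y"
    unfolding contract_edges_def by auto
  have "e \<subseteq> (Y - {x0}) \<union> X"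
  proof
    fix u assume "u \<in> e"
    then have "contract X x0 u \<in> Y" using e(4) by blast
    then show "u \<in> (Y - {x0}) \<union> X" using assms unfolding contract_def by (cases "u \<in> X") auto
  qed
  then show "e' \<in> (\<lambda>e. contract X x0 ` e) ` {e\<in>E. \<not> e \<subseteq> X \<and> e \<subseteq> (Y - {x0}) \<union> X}"
    using e by blast
qed

text \<open>A set \<open>Y\<close> through the new vertex \<open>x0\<close> corresponds to \<open>(Y - {x0}) \<union> X\<close>, which in
  addition spans the \<open>2 |X| - 2\<close> edges inside the tight set \<open>X\<close>.\<close>
lemma kk_sparse_contract_edges:
  assumes E: "graph_on V E" "kk_sparse 2 E" and X: "X \<subseteq> V" "tight_set E X" and x0: "x0 \<in> X"
  shows "kk_sparse 2 (contract_edges X x0 E)"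
  unfolding kk_sparse_def
proof (intro allI impI)
  fix Y :: "'a set" assume Y: "finite Y \<and> Y \<noteq> {}"
  have fin: "finite E" "finite X"
    using graph_on_finite_edges[OF E(1)] finite_subset[OF X(1)] E(1) unfolding graph_on_def by auto
  define S where "S = {e'\<in>contract_edges X x0 E. e' \<subseteq> Y}"
  have "card S + 2 \<le> 2 * card Y"
  proof (cases "x0 \<in> Y")
    case False
    then have "card S \<le> induced_edges E Y"
      unfolding induced_edges_def S_def using fin contract_edges_avoiding[OF x0] by (intro card_mono) auto
    moreover have "induced_edges E Y + 2 \<le> 2 * card Y" using kk_sparseD[OF E(2)] Y by blast
    ultimately show ?thesis by linarith
  next
    case True
    define Y' where "Y' = (Y - {x0}) \<union> X"
    have "card S \<le> card ((\<lambda>e. contract X x0 ` e) ` {e\<in>E. \<not> e \<subseteq> X \<and> e \<subseteq> Y'})"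
      unfolding S_def Y'_def using fin contract_edges_through[OF x0] by (intro card_mono) auto
    also have "\<dots> \<le> card {e\<in>E. \<not> e \<subseteq> X \<and> e \<subseteq> Y'}" using fin by (intro card_image_le) auto
    finally have "card S \<le> card {e\<in>E. \<not> e \<subseteq> X \<and> e \<subseteq> Y'}" .
    moreover have "induced_edges E Y' = induced_edges E X + card {e\<in>E. \<not> e \<subseteq> X \<and> e \<subseteq> Y'}"
    proof -
      have "{e\<in>E. e \<subseteq> Y'} = {e\<in>E. e \<subseteq> X} \<union> {e\<in>E. \<not> e \<subseteq> X \<and> e \<subseteq> Y'}" using Y'_def by auto
      then show ?thesis unfolding induced_edges_def by (simp only:) (rule card_Un_disjoint; use fin in auto)
    qed
    moreover have "finite Y'" "Y' \<noteq> {}" using Y fin x0 unfolding Y'_def by auto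
    then have "induced_edges E Y' + 2 \<le> 2 * card Y'" using kk_sparseD[OF E(2)] by blast
    moreover have "card Y' \<le> card (Y - {x0}) + card X" unfolding Y'_def by (rule card_Un_le)
    moreover have "card (Y - {x0}) + 1 = card Y" by (rule card_Diff_vertex) (use True Y in auto)
    ultimately show ?thesis using X(2) unfolding tight_set_def by linarith
  qed
  then show "induced_edges (contract_edges X x0 E) Y + 2 \<le> 2 * card Y"
    unfolding induced_edges_def S_def .
qed

lemma sgn_add_small: "\<bar>t\<bar> < \<bar>a\<bar> \<Longrightarrow> sgn (a + t) = sgn (a :: real)"
  by (auto simp: sgn_if abs_if split: if_splits)

lemma eventually_sgn_add_scaled:
  fixes d :: "'a \<Rightarrow> real" and h :: "'b \<Rightarrow> real"
  assumes "finite A" "finite T" "\<forall>w\<in>A. d w \<noteq> 0"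
  shows "\<forall>\<^sub>F \<delta> in at_right 0. \<forall>w\<in>A. \<forall>u\<in>T. sgn (d w + \<delta> * h u) = sgn (d w)"
proof (intro eventually_ball_finite ballI assms(1,2))
  fix w u assume w: "w \<in> A"
  have "((\<lambda>\<delta>. \<delta> * h u) \<longlongrightarrow> 0) (at_right 0)"
    by (intro tendsto_mult_left_zero tendsto_ident_at)
  moreover have "\<bar>d w\<bar> > 0" using assms(3) w by simp
  ultimately have "\<forall>\<^sub>F \<delta> in at_right 0. \<bar>\<delta> * h u\<bar> < \<bar>d w\<bar>"
    using tendstoD by (fastforce simp: dist_real_def)
  then show "\<forall>\<^sub>F \<delta> in at_right 0. sgn (d w + \<delta> * h u) = sgn (d w)"
    by (rule eventually_mono) (rule sgn_add_small)
qed

lemma concordant_pair_sgn: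
  "u \<noteq> w \<Longrightarrow> concordant f g {u, w} \<longleftrightarrow> sgn (f u - f w) * sgn (g u - g w) = 1"
  by (simp add: concordant_pair sgn_mult[symmetric] sgn_1_pos)

text \<open>The contracted vertex \<open>x0\<close> is replaced by a copy of \<open>X\<close> shrunk by the factor \<open>\<delta>\<close>.\<close>
definition blow_up :: "'a set \<Rightarrow> 'a \<Rightarrow> real \<Rightarrow> ('a \<Rightarrow> real) \<Rightarrow> ('a \<Rightarrow> real) \<Rightarrow> 'a \<Rightarrow> real" where
  "blow_up X x0 \<delta> f1 f2 u = (if u \<in> X then f1 x0 + \<delta> * f2 u else f1 u)"

lemma sgn_blow_up_diff:
  assumes small: "\<forall>w\<in>V - X. \<forall>u\<in>X. sgn (f1 x0 - f1 w + \<delta> * f2 u) = sgn (f1 x0 - f1 w)"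
    and uw: "u \<in> V" "w \<in> V" "\<not> (u \<in> X \<and> w \<in> X)"
  shows "sgn (blow_up X x0 \<delta> f1 f2 u - blow_up X x0 \<delta> f1 f2 w) =
    sgn (f1 (contract X x0 u) - f1 (contract X x0 w))"
proof -
  have swap: "sgn (a - b) = - sgn (b - a)" for a b :: real
    by (metis minus_diff_eq sgn_minus)
  consider "u \<in> X" "w \<notin> X" | "u \<notin> X" "w \<in> X" | "u \<notin> X" "w \<notin> X" using uw(3) by blast
  then show ?thesis
  proof cases
    case 1
    then have "blow_up X x0 \<delta> f1 f2 u - blow_up X x0 \<delta> f1 f2 w = f1 x0 - f1 w + \<delta> * f2 u"
      by (simp add: blow_up_def)
    then show ?thesis using small uw(2) 1 by (simp add: contract_def)
  next
    case 2
    then have "blow_up X x0 \<delta> f1 f2 w - blow_up X x0 \<delta> f1 f2 u = f1 x0 - f1 u + \<delta> * f2 w"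
      by (simp add: blow_up_def)
    then show ?thesis using small uw(1) 2 swap by (metis DiffI contract_def)
  qed (simp add: blow_up_def contract_def)
qed

lemma inj_on_blow_up:
  assumes "\<delta> > 0" "x0 \<in> X" "inj_on f1 (insert x0 (V - X))" "inj_on f2 X"
    and small: "\<forall>w\<in>V - X. \<forall>u\<in>X. sgn (f1 x0 - f1 w + \<delta> * f2 u) = sgn (f1 x0 - f1 w)"
  shows "inj_on (blow_up X x0 \<delta> f1 f2) V"
proof (rule inj_onI)
  fix u w assume uw: "u \<in> V" "w \<in> V" and eq: "blow_up X x0 \<delta> f1 f2 u = blow_up X x0 \<delta> f1 f2 w"
  show "u = w"
  proof (cases "u \<in> X \<and> w \<in> X")
    case True
    then show ?thesis using eq assms(1,4) by (simp add: blow_up_def inj_on_eq_iff)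
  next
    case False
    then have "sgn (f1 (contract X x0 u) - f1 (contract X x0 w)) = 0"
      using sgn_blow_up_diff[OF small uw] eq by simp
    then have "f1 (contract X x0 u) = f1 (contract X x0 w)" by (simp add: sgn_0_0)
    moreover have "contract X x0 u \<in> insert x0 (V - X)" "contract X x0 w \<in> insert x0 (V - X)"
      using uw unfolding contract_def by auto
    ultimately have "contract X x0 u = contract X x0 w" by (rule inj_onD[OF assms(3)])
    then show ?thesis using False assms(2) unfolding contract_def by (auto split: if_splits)
  qed
qed

lemma concordant_blow_up_inside:
  assumes "\<delta> > 0" "e \<subseteq> X"
  shows "concordant (blow_up X x0 \<delta> f1 f2) (blow_up X x0 \<delta> g1 g2) e \<longleftrightarrow> concordant f2 g2 e"
proof -
  have "\<forall>u\<in>e. \<forall>w\<in>e. (blow_up X x0 \<delta> f1 f2 u - blow_up X x0 \<delta> f1 f2 w) * (blow_up X x0 \<delta> g1 g2 u - blow_up X x0 \<delta> g1 g2 w)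
      = (\<delta> * \<delta>) * ((f2 u - f2 w) * (g2 u - g2 w))"
    using assms(2) by (auto simp: blow_up_def algebra_simps)
  then show ?thesis using assms(1) unfolding concordant_def by (simp add: zero_less_mult_iff)
qed

lemma concordant_blow_up_outside:
  assumes E: "graph_on V E" "e \<in> E" "\<not> e \<subseteq> X" and x0: "x0 \<in> X"
    and small: "\<forall>w\<in>V - X. \<forall>u\<in>X. sgn (f1 x0 - f1 w + \<delta> * f2 u) = sgn (f1 x0 - f1 w)"
      "\<forall>w\<in>V - X. \<forall>u\<in>X. sgn (g1 x0 - g1 w + \<delta> * g2 u) = sgn (g1 x0 - g1 w)"
  shows "concordant (blow_up X x0 \<delta> f1 f2) (blow_up X x0 \<delta> g1 g2) e \<longleftrightarrow>
    concordant f1 g1 (contract X x0 ` e)"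
proof -
  obtain u w where uw: "e = {u, w}" "u \<noteq> w" "u \<in> V" "w \<in> V" using graph_on_edgeE[OF E(1,2)] .
  then have out: "\<not> (u \<in> X \<and> w \<in> X)" using E(3) by auto
  then have "contract X x0 u \<noteq> contract X x0 w" using uw(2) x0 unfolding contract_def by auto
  then show ?thesis
    using uw out sgn_blow_up_diff[OF small(1) uw(3,4)] sgn_blow_up_diff[OF small(2) uw(3,4)]
    by (simp add: concordant_pair_sgn)
qed

lemma forest_realization_colour_class:
  "forest_realization V E f g \<Longrightarrow> forest {e\<in>E. concordant f g e = b}"
  by (cases b) (simp_all add: forest_realization_def)

section \<open>Existence of forest realizations\<close>

lemma exists_blow_up_scale:
  fixes f1 f2 g1 g2 :: "'a \<Rightarrow> real"
  assumes "finite (V - X)" "finite X" "x0 \<in> X"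
    and "inj_on f1 (insert x0 (V - X))" "inj_on g1 (insert x0 (V - X))"
  obtains \<delta> where "\<delta> > 0"
    "\<forall>w\<in>V - X. \<forall>u\<in>X. sgn (f1 x0 - f1 w + \<delta> * f2 u) = sgn (f1 x0 - f1 w)"
    "\<forall>w\<in>V - X. \<forall>u\<in>X. sgn (g1 x0 - g1 w + \<delta> * g2 u) = sgn (g1 x0 - g1 w)"
proof -
  have "\<forall>w\<in>V - X. f1 x0 - f1 w \<noteq> 0" "\<forall>w\<in>V - X. g1 x0 - g1 w \<noteq> 0"
    using assms(3-5) by (auto simp: inj_on_eq_iff)
  then have "\<forall>\<^sub>F \<delta> in at_right 0. 0 < \<delta> \<and>
      (\<forall>w\<in>V - X. \<forall>u\<in>X. sgn (f1 x0 - f1 w + \<delta> * f2 u) = sgn (f1 x0 - f1 w)) \<and>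
      (\<forall>w\<in>V - X. \<forall>u\<in>X. sgn (g1 x0 - g1 w + \<delta> * g2 u) = sgn (g1 x0 - g1 w))"
    using eventually_at_right_less eventually_sgn_add_scaled[OF assms(1,2)] by (intro eventually_conj) auto
  then show ?thesis using that eventually_happens'[OF trivial_limit_at_right_real] by blast
qed

lemma forest_realization_blow_up:
  assumes E: "graph_on V E" and X: "X \<subseteq> V" "x0 \<in> X"
    and inj_contract: "inj_on (\<lambda>e. contract X x0 ` e) {e\<in>E. \<not> e \<subseteq> X}"
    and r1: "forest_realization (insert x0 (V - X)) (contract_edges X x0 E) f1 g1"
    and r2: "forest_realization X {e\<in>E. e \<subseteq> X} f2 g2"
  shows "\<exists>f g. forest_realization V E f g"
proof -
  have fin: "finite E" "finite (V - X)" "finite X"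
    using graph_on_finite_edges[OF E] finite_subset[OF X(1)] E unfolding graph_on_def by auto
  have inj1: "inj_on f1 (insert x0 (V - X))" "inj_on g1 (insert x0 (V - X))"
    and inj2: "inj_on f2 X" "inj_on g2 X"
    using r1 r2 unfolding forest_realization_def by simp_all
  obtain \<delta> where \<delta>: "\<delta> > 0"
    and small: "\<forall>w\<in>V - X. \<forall>u\<in>X. sgn (f1 x0 - f1 w + \<delta> * f2 u) = sgn (f1 x0 - f1 w)"
      "\<forall>w\<in>V - X. \<forall>u\<in>X. sgn (g1 x0 - g1 w + \<delta> * g2 u) = sgn (g1 x0 - g1 w)"
    using exists_blow_up_scale[OF fin(2,3) X(2) inj1] by blast
  define f where "f = blow_up X x0 \<delta> f1 f2"
  define g where "g = blow_up X x0 \<delta> g1 g2"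
  have colours: "forest {e\<in>E. concordant f g e = b}" for b
  proof (rule forest_of_contraction[OF _ _ X(2)])
    show "finite {e\<in>E. concordant f g e = b}" using fin(1) by simp
    show "\<forall>e\<in>{e\<in>E. concordant f g e = b}. e \<noteq> {}" using E unfolding graph_on_def by auto
    show "inj_on (\<lambda>e. contract X x0 ` e) {e\<in>{e\<in>E. concordant f g e = b}. \<not> e \<subseteq> X}"
      by (rule inj_on_subset[OF inj_contract]) auto
    have "concordant f g e = concordant f2 g2 e" if "e \<subseteq> X" for e
      using concordant_blow_up_inside[OF \<delta> that] unfolding f_def g_def .
    then have "{e\<in>{e\<in>E. concordant f g e = b}. e \<subseteq> X} = {e\<in>{e\<in>E. e \<subseteq> X}. concordant f2 g2 e = b}"
      by auto
    then show "forest {e\<in>{e\<in>E. concordant f g e = b}. e \<subseteq> X}"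
      using forest_realization_colour_class[OF r2] by simp
    have "concordant f g e = concordant f1 g1 (contract X x0 ` e)" if "e \<in> E" "\<not> e \<subseteq> X" for e
      using concordant_blow_up_outside[OF E that X(2) small] unfolding f_def g_def .
    then have "{e\<in>{e\<in>E. concordant f g e = b}. \<not> e \<subseteq> X} =
        {e\<in>{e\<in>E. \<not> e \<subseteq> X}. concordant f1 g1 (contract X x0 ` e) = b}"
      by auto
    then have "contract_edges X x0 {e\<in>E. concordant f g e = b} =
        {e'\<in>contract_edges X x0 E. concordant f1 g1 e' = b}"
      unfolding contract_edges_def by auto
    then show "forest (contract_edges X x0 {e\<in>E. concordant f g e = b})"
      using forest_realization_colour_class[OF r1] by simp
  qed
  moreover have "inj_on f V" "inj_on g V"
    unfolding f_def g_def using \<delta> X(2) inj1 inj2 small by (simp_all add: inj_on_blow_up)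
  ultimately have "forest_realization V E f g"
    unfolding forest_realization_def using colours[of True] colours[of False] by simp
  then show ?thesis by blast
qed

lemma forest_realization_tight_case:
  fixes V :: "'a set"
  assumes E: "graph_on V E" "kk_sparse 2 E" and Y: "Y \<subset> V" "tight_set E Y"
    and min_degree: "\<forall>w\<in>V. 3 \<le> vertex_degree E w"
    and IH: "\<And>(V' :: 'a set) E'. card V' < card V \<Longrightarrow> graph_on V' E' \<Longrightarrow> kk_sparse 2 E' \<Longrightarrow>
      \<exists>f g. forest_realization V' E' f g"
  shows "\<exists>f g. forest_realization V E f g"
proof -
  have finV: "finite V" using E(1) unfolding graph_on_def by simp
  have "\<forall>Z. Z \<subset> V \<and> tight_set E Z \<longrightarrow> card Z < Suc (card V)"
    using finV by (simp add: less_SucI psubset_card_mono)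
  then have "\<exists>X. (X \<subset> V \<and> tight_set E X) \<and> (\<forall>Z. Z \<subset> V \<and> tight_set E Z \<longrightarrow> card Z \<le> card X)"
    using Y by (intro Lattices_Big.ex_has_greatest_nat[of "\<lambda>Z. Z \<subset> V \<and> tight_set E Z" Y]) auto
  then obtain X where X: "X \<subset> V" "tight_set E X" and max: "\<forall>Z\<subset>V. tight_set E Z \<longrightarrow> card Z \<le> card X"
    by auto
  have finX: "finite X" and cardX: "2 \<le> card X"
    using finite_subset[of X V] X finV unfolding tight_set_def by auto
  then obtain x0 where x0: "x0 \<in> X" by fastforce
  have "card (insert x0 (V - X)) < card V"
  proof -
    have "card (insert x0 (V - X)) \<le> card (V - X) + 1" using finV by (simp add: card_insert_if)
    moreover have "card (V - X) + card X = card V"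
      using card_Diff_subset[OF finX] card_mono[OF finV] X(1) by fastforce
    ultimately show ?thesis using cardX by linarith
  qed
  moreover have "X \<subseteq> V" using X(1) by blast
  ultimately obtain f1 g1 where r1: "forest_realization (insert x0 (V - X)) (contract_edges X x0 E) f1 g1"
    using IH[of "insert x0 (V - X)" "contract_edges X x0 E"] graph_on_contract_edges[OF E(1) x0]
      kk_sparse_contract_edges[OF E \<open>X \<subseteq> V\<close> X(2) x0] by blast
  have "graph_on X {e\<in>E. e \<subseteq> X}" using finX E(1) unfolding graph_on_def by auto
  moreover have "kk_sparse 2 {e\<in>E. e \<subseteq> X}"
    using kk_sparse_mono[OF E(2)] graph_on_finite_edges[OF E(1)] by auto
  ultimately obtain f2 g2 where r2: "forest_realization X {e\<in>E. e \<subseteq> X} f2 g2"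
    using IH psubset_card_mono[OF finV X(1)] by blast
  have "\<forall>w\<in>V - X. \<forall>x1\<in>X. \<forall>x2\<in>X. {w, x1} \<in> E \<longrightarrow> {w, x2} \<in> E \<longrightarrow> x1 = x2"
    using tight_set_unique_neighbour[OF E X max min_degree] by blast
  then show ?thesis
    using forest_realization_blow_up[OF E(1) _ x0 inj_on_contract_image[OF E(1) x0] r1 r2] X(1) by blast
qed

lemma tight_set_K4:
  assumes E: "finite E" "kk_sparse 2 E"
    and distinct: "a \<noteq> v" "b \<noteq> v" "c \<noteq> v" "a \<noteq> b" "a \<noteq> c" "b \<noteq> c"
    and edges: "{v, a} \<in> E" "{v, b} \<in> E" "{v, c} \<in> E" "{a, b} \<in> E" "{a, c} \<in> E" "{b, c} \<in> E"
  shows "tight_set E {v, a, b, c}"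
proof -
  have "{{v, a}, {v, b}, {v, c}, {a, b}, {a, c}, {b, c}} \<subseteq> {e\<in>E. e \<subseteq> {v, a, b, c}}"
    using edges by auto
  then have "card {{v, a}, {v, b}, {v, c}, {a, b}, {a, c}, {b, c}} \<le> induced_edges E {v, a, b, c}"
    unfolding induced_edges_def using E(1) by (intro card_mono) auto
  moreover have "card {{v, a}, {v, b}, {v, c}, {a, b}, {a, c}, {b, c}} = 6"
    using distinct by (simp add: doubleton_eq_iff)
  moreover have "card {v, a, b, c} = 4" using distinct by simp
  moreover have "induced_edges E {v, a, b, c} + 2 \<le> 2 * card {v, a, b, c}"
    using kk_sparseD[OF E(2)] by simp
  ultimately show ?thesis unfolding tight_set_def by simp
qed

text \<open>If the three neighbours of \<open>v\<close> are pairwise adjacent, they span with \<open>v\<close> a tight \<open>K\<^sub>4\<close>,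
  which must be the whole graph; otherwise a non-adjacent pair of neighbours gives a
  1-reduction.\<close>
lemma forest_realization_degree_three_case:
  assumes E: "graph_on V E" "kk_sparse 2 E" and v: "v \<in> V" "vertex_degree E v = 3"
    and no_tight: "\<forall>Y\<subset>V. \<not> tight_set E Y"
    and IH: "\<And>E'. graph_on (V - {v}) E' \<Longrightarrow> kk_sparse 2 E' \<Longrightarrow> \<exists>f g. forest_realization (V - {v}) E' f g"
  shows "\<exists>f g. forest_realization V E f g"
proof -
  define N where "N = {u. {v, u} \<in> E}"
  have N: "card N = 3" "finite N" using v(2) vertex_degree_eq_card_neighbours[OF E(1)] unfolding N_def
    by (simp_all add: card_ge_0_finite)
  have NV: "u \<in> V - {v}" if "u \<in> N" for u using neighbour_in_graph_on[OF E(1)] that unfolding N_def by auto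
  show ?thesis
  proof (cases "\<forall>a\<in>N. \<forall>b\<in>N. a \<noteq> b \<longrightarrow> {a, b} \<in> E")
    case True
    obtain a b c where abc: "N = {a, b, c}" "a \<noteq> b" "b \<noteq> c" "a \<noteq> c"
      using N(1) unfolding card_3_iff by blast
    then have "a \<in> N" "b \<in> N" "c \<in> N" by simp_all
    then have abcV: "a \<noteq> v" "b \<noteq> v" "c \<noteq> v" "a \<in> V" "b \<in> V" "c \<in> V" using NV by blast+
    have "tight_set E {v, a, b, c}"
      using True abc \<open>a \<in> N\<close> \<open>b \<in> N\<close> \<open>c \<in> N\<close> graph_on_finite_edges[OF E(1)] abcV(1-3)
      by (intro tight_set_K4 E(2)) (auto simp: N_def)
    moreover have "{v, a, b, c} \<subseteq> V" using v(1) abcV(4-6) by auto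
    ultimately have "V = {v, a, b, c}" using no_tight by blast
    then show ?thesis
      using forest_realization_K4[of V v a b c E] abc(2-4) abcV(1-3) E(1) by blast
  next
    case False
    then obtain a b where ab: "a \<in> N" "b \<in> N" "a \<noteq> b" "{a, b} \<notin> E" by blast
    have "card (N - {a, b}) = 1" using N ab by (simp add: card_Diff_subset)
    then obtain c where c: "N - {a, b} = {c}" by (rule card_1_singletonE)
    then have Nabc: "N = {a, b, c}" "c \<noteq> a" "c \<noteq> b" "c \<in> N" using ab(1,2) by auto
    then have star: "{e\<in>E. v \<in> e} = {{v, a}, {v, b}, {v, c}}"
      unfolding star_eq_neighbours[OF E(1)] N_def[symmetric] by simp
    have distinct: "a \<noteq> v" "b \<noteq> v" "c \<noteq> v" "a \<noteq> b" "a \<noteq> c" "b \<noteq> c"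
      using NV[OF ab(1)] NV[OF ab(2)] NV[OF Nabc(4)] ab(3) Nabc(2,3) by auto
    have "graph_on (V - {v}) (insert {a, b} {e\<in>E. v \<notin> e})"
      using graph_on_delete_vertex[OF E(1), of v] NV[OF ab(1)] NV[OF ab(2)] ab(3)
      unfolding graph_on_def by auto
    moreover have "kk_sparse 2 (insert {a, b} {e\<in>E. v \<notin> e})"
      using kk_sparse_one_reduction[OF E v(1) NV[OF ab(1)] NV[OF ab(2)] ab(3,4) no_tight] .
    ultimately obtain f g where "forest_realization (V - {v}) (insert {a, b} {e\<in>E. v \<notin> e}) f g"
      using IH by blast
    then show ?thesis using forest_realization_one_extension[OF E(1) v(1) star distinct ab(4)] by blast
  qed
qed

lemma kk_sparse_graph_cases:
  assumes E: "graph_on V E" "kk_sparse 2 E"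
  obtains (empty) "V = {}"
    | (low_degree) v where "v \<in> V" "vertex_degree E v \<le> 2"
    | (tight) Y where "Y \<subset> V" "tight_set E Y" "\<forall>w\<in>V. 3 \<le> vertex_degree E w"
    | (degree_three) v where "v \<in> V" "vertex_degree E v = 3" "\<forall>Y\<subset>V. \<not> tight_set E Y"
proof (cases "V = {} \<or> (\<exists>v\<in>V. vertex_degree E v \<le> 2)")
  case True
  then show ?thesis using that(1,2) by blast
next
  case False
  then have min_degree: "\<forall>w\<in>V. 3 \<le> vertex_degree E w" by auto
  obtain v where "v \<in> V" "vertex_degree E v \<le> 3"
    using exists_vertex_degree_le_3[OF E(1) _ E(2)] False by blast
  then have "vertex_degree E v = 3" using min_degree by (simp add: le_antisym)
  then show ?thesis using that(3,4) \<open>v \<in> V\<close> min_degree by blast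
qed

theorem forest_realization_exists:
  fixes V :: "'a set"
  shows "graph_on V E \<Longrightarrow> kk_sparse 2 E \<Longrightarrow> \<exists>f g. forest_realization V E f g"
proof (induction "card V" arbitrary: V E rule: less_induct)
  case less
  note E = less.prems
  have IH: "\<And>(V' :: 'a set) E'. card V' < card V \<Longrightarrow> graph_on V' E' \<Longrightarrow> kk_sparse 2 E' \<Longrightarrow>
      \<exists>f g. forest_realization V' E' f g"
    using less.hyps by blast
  have finV: "finite V" using E(1) unfolding graph_on_def by simp
  have IH_delete: "\<exists>f g. forest_realization (V - {v}) E' f g"
    if "v \<in> V" "graph_on (V - {v}) E'" "kk_sparse 2 E'" for v E'
    using IH[OF card_Diff1_less[OF finV that(1)] that(2,3)] .
  from E show ?case
  proof (cases rule: kk_sparse_graph_cases)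
    case empty
    then have "E = {}" using E(1) unfolding graph_on_def by auto
    then have "forest_realization V E (\<lambda>_. 0) (\<lambda>_. 0)"
      using empty kk_sparse_empty unfolding forest_realization_def by simp
    then show ?thesis by blast
  next
    case (low_degree v)
    have "kk_sparse 2 {e\<in>E. v \<notin> e}" using kk_sparse_mono[OF E(2)] graph_on_finite_edges[OF E(1)] by auto
    then show ?thesis
      using forest_realization_add_low_degree_vertex[OF E(1) low_degree]
        IH_delete[OF low_degree(1) graph_on_delete_vertex[OF E(1)]]
      by blast
  next
    case (tight Y)
    then show ?thesis using forest_realization_tight_case[OF E tight IH] by blast
  next
    case (degree_three v)
    then show ?thesis
      using forest_realization_degree_three_case[OF E degree_three IH_delete[OF degree_three(1)]] by blast
  qed
qed

section \<open>Spanning trees\<close>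

lemma constant_on_spanning_tree:
  assumes P: "graph_on V P" "forest P" "card P + 1 = card V"
    and h: "\<forall>e\<in>P. \<forall>u\<in>e. \<forall>w\<in>e. h u = h w" and uw: "u0 \<in> V" "w0 \<in> V"
  shows "h u0 = h w0"
proof (rule ccontr)
  assume ne: "h u0 \<noteq> h w0"
  define X where "X = {v\<in>V. h v = h u0}"
  have fin: "finite V" "finite P" using P(1) graph_on_finite_edges unfolding graph_on_def by auto
  have X: "finite X" "X \<noteq> {}" "finite (V - X)" "V - X \<noteq> {}" using fin uw ne unfolding X_def by auto
  have split: "card V = card X + card (V - X)"
    using card_Diff_subset[OF X(1)] card_mono[OF fin(1)] unfolding X_def by fastforce
  have "P \<subseteq> {e\<in>P. e \<subseteq> X} \<union> {e\<in>P. e \<subseteq> V - X}"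
  proof
    fix e assume e: "e \<in> P"
    obtain u w where "e = {u, w}" "u \<noteq> w" "u \<in> V" "w \<in> V" by (rule graph_on_edgeE[OF P(1) e])
    moreover from this(1) have "u \<in> e" "w \<in> e" by simp_all
    then have "h u = h w" by (rule bspec[OF bspec[OF bspec[OF h e]]])
    ultimately show "e \<in> {e\<in>P. e \<subseteq> X} \<union> {e\<in>P. e \<subseteq> V - X}" using e unfolding X_def by auto
  qed
  then have "card P \<le> card ({e\<in>P. e \<subseteq> X} \<union> {e\<in>P. e \<subseteq> V - X})"
    using fin(2) by (intro card_mono) auto
  also have "\<dots> \<le> induced_edges P X + induced_edges P (V - X)"
    unfolding induced_edges_def by (rule card_Un_le)
  finally have "card P \<le> induced_edges P X + induced_edges P (V - X)" .
  moreover have "induced_edges P X + 1 \<le> card X" "induced_edges P (V - X) + 1 \<le> card (V - X)"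
    using kk_sparseD[OF P(2)] X by auto
  ultimately show False using P(3) split by linarith
qed

lemma induced_edges_insert_vertex:
  assumes "finite P" "w \<notin> X"
  shows "induced_edges P (insert w X) = induced_edges P X + card {e\<in>P. w \<in> e \<and> e \<subseteq> insert w X}"
proof -
  have "{e\<in>P. e \<subseteq> insert w X} = {e\<in>P. e \<subseteq> X} \<union> {e\<in>P. w \<in> e \<and> e \<subseteq> insert w X}" by auto
  moreover have "{e\<in>P. e \<subseteq> X} \<inter> {e\<in>P. w \<in> e \<and> e \<subseteq> insert w X} = {}" using assms(2) by auto
  ultimately show ?thesis
    unfolding induced_edges_def by (simp only:) (rule card_Un_disjoint; use assms(1) in auto)
qed

text \<open>Removing the edge \<open>{a, b}\<close> from a forest separates \<open>a\<close> from \<open>b\<close>: a largest set \<open>X\<close> that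
  contains \<open>a\<close> but not \<open>b\<close> and spans a tree is not crossed by any remaining edge, since such an edge
  would either close a cycle through \<open>{a, b}\<close> or extend \<open>X\<close>.\<close>
lemma forest_edge_cut:
  assumes P: "forest P" "finite P" "\<forall>e\<in>P. card e = 2" and ab: "{a, b} \<in> P" "a \<noteq> b"
  shows "\<exists>X. a \<in> X \<and> b \<notin> X \<and> (\<forall>e\<in>P - {{a, b}}. e \<subseteq> X \<or> e \<inter> X = {})"
proof -
  define P' where "P' = P - {{a, b}}"
  have P': "finite P'" "forest P'" using P kk_sparse_mono[OF P(1)] unfolding P'_def by auto
  define T where "T X \<longleftrightarrow> a \<in> X \<and> b \<notin> X \<and> induced_edges P' X + 1 = card X" for X
  have "{e\<in>P'. e \<subseteq> {a}} = {}"
    using P(3) unfolding P'_def by (auto dest!: card_mono[of "{a}", rotated])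
  then have "T {a}" unfolding T_def induced_edges_def using ab by simp
  moreover have "\<forall>Y. T Y \<longrightarrow> card Y < card P' + 2"
  proof (intro allI impI)
    fix Y assume "T Y"
    then have "card Y = induced_edges P' Y + 1" unfolding T_def by simp
    moreover have "induced_edges P' Y \<le> card P'"
      unfolding induced_edges_def using P'(1) by (intro card_mono) auto
    ultimately show "card Y < card P' + 2" by linarith
  qed
  ultimately have "\<exists>X. T X \<and> (\<forall>Y. T Y \<longrightarrow> card Y \<le> card X)"
    by (rule Lattices_Big.ex_has_greatest_nat)
  then obtain X where X: "T X" and max: "\<forall>Y. T Y \<longrightarrow> card Y \<le> card X" by blast
  then have XX: "a \<in> X" "b \<notin> X" "induced_edges P' X + 1 = card X" "finite X"
    unfolding T_def by (auto intro: card_ge_0_finite)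
  have "e \<subseteq> X \<or> e \<inter> X = {}" if e: "e \<in> P'" for e
  proof (rule ccontr)
    assume "\<not> ?thesis"
    then obtain u w where uw: "u \<in> e" "u \<in> X" "w \<in> e" "w \<notin> X" by blast
    moreover have "card e = 2" using P(3) e unfolding P'_def by blast
    ultimately have ee: "e = {u, w}" by (intro two_element_set_eq) auto
    have cardX: "card (insert w X) = card X + 1" using uw(4) XX(4) by simp
    show False
    proof (cases "w = b")
      case True
      have "{e, {a, b}} \<subseteq> {e'\<in>P. b \<in> e' \<and> e' \<subseteq> insert b X}"
        using e ee uw True XX(1) ab(1) unfolding P'_def by auto
      then have "card {e, {a, b}} \<le> card {e'\<in>P. b \<in> e' \<and> e' \<subseteq> insert b X}"
        using P(2) by (intro card_mono) auto
      moreover have "card {e, {a, b}} = 2" using e unfolding P'_def by auto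
      ultimately have "2 \<le> card {e'\<in>P. b \<in> e' \<and> e' \<subseteq> insert b X}" by simp
      moreover have "induced_edges P' X \<le> induced_edges P X"
        using P(2) unfolding P'_def by (intro induced_edges_mono) auto
      moreover have "induced_edges P (insert b X) + 1 \<le> card (insert b X)"
        using kk_sparseD[OF P(1)] XX(4) by auto
      ultimately show False
        using induced_edges_insert_vertex[OF P(2) XX(2)] XX(3) cardX[unfolded True] by linarith
    next
      case False
      have "{e} \<subseteq> {e'\<in>P'. w \<in> e' \<and> e' \<subseteq> insert w X}" using e ee uw by auto
      then have "card {e} \<le> card {e'\<in>P'. w \<in> e' \<and> e' \<subseteq> insert w X}"
        using P'(1) by (intro card_mono) auto
      moreover have "induced_edges P' (insert w X) + 1 \<le> card (insert w X)"
        using kk_sparseD[OF P'(2)] XX(4) by auto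
      ultimately have "induced_edges P' (insert w X) + 1 = card (insert w X)"
        using induced_edges_insert_vertex[OF P'(1) uw(4)] XX(3) cardX by simp
      then have "T (insert w X)" using XX(1,2) False unfolding T_def by simp
      then have "card (insert w X) \<le> card X" using max by blast
      then show False using cardX by simp
    qed
  qed
  then show ?thesis using XX unfolding P'_def by blast
qed

section \<open>The diagonal placement\<close>

text \<open>Rotating the frame by 45 degrees: along a concordant edge the first coordinate of the
  difference dominates, along a discordant one the second.\<close>
definition diagonal_placement :: "('a::finite \<Rightarrow> real) \<Rightarrow> ('a \<Rightarrow> real) \<Rightarrow> (real^2)^'a" where
  "diagonal_placement f g = (\<chi> v. vector [f v + g v, f v - g v])"

definition edge_coordinate :: "('a \<Rightarrow> real) \<Rightarrow> ('a \<Rightarrow> real) \<Rightarrow> 'a set \<Rightarrow> 2" where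
  "edge_coordinate f g e = (if concordant f g e then 1 else 2)"

lemma linf_dominant:
  fixes y :: "real^2"
  assumes "k \<noteq> j" "\<bar>y $ j\<bar> < \<bar>y $ k\<bar>"
  shows "linf y = \<bar>y $ k\<bar>" "{i. linf y = \<bar>y $ i\<bar>} = {k}"
proof -
  have kj: "k = 1 \<and> j = 2 \<or> k = 2 \<and> j = 1" using assms(1) exhaust_2[of k] exhaust_2[of j] by auto
  then show linf: "linf y = \<bar>y $ k\<bar>" using assms(2) unfolding linf_def by auto
  have "linf y = \<bar>y $ i\<bar> \<longleftrightarrow> i = k" for i using linf kj assms(2) exhaust_2[of i] by auto
  then show "{i. linf y = \<bar>y $ i\<bar>} = {k}" by simp
qed

lemma edge_len_has_derivative:
  fixes p :: "(real^2)^'a::finite" and k j :: 2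
  assumes kj: "k \<noteq> j" and dominant: "\<bar>(p$u - p$w)$j\<bar> < \<bar>(p$u - p$w)$k\<bar>"
  shows "(edge_len u w has_derivative (\<lambda>x. sgn ((p$u - p$w)$k) * (x$u - x$w)$k)) (at p)"
proof -
  define s where "s = sgn ((p$u - p$w)$k)"
  have s: "s * (p$u - p$w)$k = \<bar>(p$u - p$w)$k\<bar>" "s = 1 \<or> s = -1"
    using dominant unfolding s_def by (auto simp: sgn_if)
  define U where "U = {x::(real^2)^'a. \<bar>(x$u - x$w)$j\<bar> < s * (x$u - x$w)$k}"
  have "open U" unfolding U_def by (intro open_Collect_less continuous_intros)
  moreover have "p \<in> U" unfolding U_def using s dominant by simp
  moreover have "s * (x$u - x$w)$k = edge_len u w x" if "x \<in> U" for x
  proof -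
    have "\<bar>(x$u - x$w)$j\<bar> < s * (x$u - x$w)$k" using that unfolding U_def by simp
    moreover from this have "s * (x$u - x$w)$k = \<bar>(x$u - x$w)$k\<bar>" using s(2) by auto
    ultimately show ?thesis unfolding edge_len_def using linf_dominant(1)[OF kj] by simp
  qed
  moreover have "linear (\<lambda>x::(real^2)^'a. s * (x$u - x$w)$k)"
    by (rule linearI) (simp_all add: algebra_simps)
  then have "((\<lambda>x::(real^2)^'a. s * (x$u - x$w)$k) has_derivative (\<lambda>x. s * (x$u - x$w)$k)) (at p)"
    by (simp add: bounded_linear_imp_has_derivative linear_conv_bounded_linear)
  ultimately show ?thesis unfolding s_def using has_derivative_transform_within_open by blast
qed

lemma diagonal_placement_dominant:
  assumes "u \<noteq> w" "f u \<noteq> f w" "g u \<noteq> g w"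
  defines "d \<equiv> diagonal_placement f g $ u - diagonal_placement f g $ w"
    and "k \<equiv> edge_coordinate f g {u, w}"
  obtains j where "k \<noteq> j" "\<bar>d $ j\<bar> < \<bar>d $ k\<bar>"
proof -
  have d: "d $ 1 = (f u - f w) + (g u - g w)" "d $ 2 = (f u - f w) - (g u - g w)"
    unfolding d_def diagonal_placement_def by simp_all
  have "(f u - f w) * (g u - g w) \<noteq> 0" using assms(2,3) by simp
  then consider "(f u - f w) * (g u - g w) > 0" "k = 1" | "(f u - f w) * (g u - g w) < 0" "k = 2"
    using assms(1) unfolding k_def edge_coordinate_def by (force simp: concordant_pair)
  then show ?thesis
  proof cases
    case 1
    then have "\<bar>d $ 2\<bar> < \<bar>d $ 1\<bar>" unfolding d by (auto simp: zero_less_mult_iff abs_if)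
    then show ?thesis using that[of 2] 1 by simp
  next
    case 2
    then have "\<bar>d $ 1\<bar> < \<bar>d $ 2\<bar>" unfolding d by (auto simp: mult_less_0_iff abs_if)
    then show ?thesis using that[of 1] 2 by simp
  qed
qed

lemma diagonal_placement_edge:
  assumes "inj f" "inj g" "u \<noteq> w"
  defines "p \<equiv> diagonal_placement f g" and "k \<equiv> edge_coordinate f g {u, w}"
  shows "{i. linf (p$u - p$w) = \<bar>(p$u - p$w)$i\<bar>} = {k}"
    and "frechet_derivative (edge_len u w) (at p) x = 0 \<longleftrightarrow> (x$u)$k = (x$w)$k"
proof -
  have "f u \<noteq> f w" "g u \<noteq> g w" using assms(1-3) by (simp_all add: inj_eq)
  then obtain j where kj: "k \<noteq> j" and dominant: "\<bar>(p$u - p$w)$j\<bar> < \<bar>(p$u - p$w)$k\<bar>"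
    using diagonal_placement_dominant[OF assms(3)] unfolding p_def k_def by blast
  show "{i. linf (p$u - p$w) = \<bar>(p$u - p$w)$i\<bar>} = {k}" by (rule linf_dominant(2)[OF kj dominant])
  have "frechet_derivative (edge_len u w) (at p) = (\<lambda>x. sgn ((p$u - p$w)$k) * (x$u - x$w)$k)"
    using edge_len_has_derivative[OF kj dominant] by (rule frechet_derivative_at[symmetric])
  moreover have "sgn ((p$u - p$w)$k) \<noteq> 0" using dominant by (simp add: sgn_0_0)
  ultimately show "frechet_derivative (edge_len u w) (at p) x = 0 \<longleftrightarrow> (x$u)$k = (x$w)$k" by simp
qed

lemma diagonal_placement_kernel_iff:
  assumes "inj f" "inj g" "\<forall>e\<in>E. card e = 2"
  shows "(\<forall>u w. {u, w} \<in> E \<longrightarrow> frechet_derivative (edge_len u w) (at (diagonal_placement f g)) x = 0)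
    \<longleftrightarrow> (\<forall>e\<in>E. \<forall>u\<in>e. \<forall>w\<in>e. (x$u)$(edge_coordinate f g e) = (x$w)$(edge_coordinate f g e))"
proof
  assume kernel: "\<forall>u w. {u, w} \<in> E \<longrightarrow> frechet_derivative (edge_len u w) (at (diagonal_placement f g)) x = 0"
  show "\<forall>e\<in>E. \<forall>u\<in>e. \<forall>w\<in>e. (x$u)$(edge_coordinate f g e) = (x$w)$(edge_coordinate f g e)"
  proof (intro ballI)
    fix e u w assume e: "e \<in> E" "u \<in> e" "w \<in> e"
    show "(x$u)$(edge_coordinate f g e) = (x$w)$(edge_coordinate f g e)"
    proof (cases "u = w")
      case False
      have uw: "e = {u, w}" by (rule two_element_set_eq) (use assms(3) e False in auto)
      then have "frechet_derivative (edge_len u w) (at (diagonal_placement f g)) x = 0"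
        using kernel e(1) by blast
      then show ?thesis unfolding uw by (simp add: diagonal_placement_edge(2)[OF assms(1,2) False])
    qed simp
  qed
next
  assume coordinates: "\<forall>e\<in>E. \<forall>u\<in>e. \<forall>w\<in>e. (x$u)$(edge_coordinate f g e) = (x$w)$(edge_coordinate f g e)"
  show "\<forall>u w. {u, w} \<in> E \<longrightarrow> frechet_derivative (edge_len u w) (at (diagonal_placement f g)) x = 0"
  proof (intro allI impI)
    fix u w assume e: "{u, w} \<in> E"
    then have "u \<noteq> w" using assms(3) by fastforce
    moreover have "(x$u)$(edge_coordinate f g {u, w}) = (x$w)$(edge_coordinate f g {u, w})"
      using coordinates e by blast
    ultimately show "frechet_derivative (edge_len u w) (at (diagonal_placement f g)) x = 0"
      by (simp add: diagonal_placement_edge(2)[OF assms(1,2)])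
  qed
qed

lemma rigid_diagonal_placement:
  fixes E :: "'a::finite set set"
  assumes inj: "inj f" "inj g" and E: "\<forall>e\<in>E. card e = 2"
    and trees: "\<And>k. forest {e\<in>E. edge_coordinate f g e = k}"
      "\<And>k. card {e\<in>E. edge_coordinate f g e = k} + 1 = CARD('a)"
  shows "rigid E (diagonal_placement f g)"
  unfolding rigid_def
proof (intro allI impI)
  fix x :: "(real^2)^'a"
  assume "\<forall>u w. {u, w} \<in> E \<longrightarrow> frechet_derivative (edge_len u w) (at (diagonal_placement f g)) x = 0"
  then have coordinates: "\<forall>e\<in>E. \<forall>u\<in>e. \<forall>w\<in>e. (x$u)$(edge_coordinate f g e) = (x$w)$(edge_coordinate f g e)"
    using diagonal_placement_kernel_iff[OF inj E] by blast
  have "(x$v)$k = (x$v0)$k" for v v0 k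
  proof (rule constant_on_spanning_tree[OF _ trees(1) trees(2)])
    show "graph_on UNIV {e\<in>E. edge_coordinate f g e = k}" using E unfolding graph_on_def by simp
    show "\<forall>e\<in>{e\<in>E. edge_coordinate f g e = k}. \<forall>u\<in>e. \<forall>w\<in>e. (x$u)$k = (x$w)$k"
      using coordinates by blast
  qed simp_all
  then have "x$v = x$undefined" for v by (simp add: vec_eq_iff)
  then show "\<exists>a. \<forall>v. x$v = a" by blast
qed

text \<open>Cutting the tree of colour \<open>k\<close> at the removed edge, the translation of one side in direction
  \<open>k\<close> is a non-trivial infinitesimal motion.\<close>
lemma diagonal_placement_not_rigid_delete_edge:
  assumes inj: "inj f" "inj g" and E: "\<forall>e\<in>E. card e = 2" "finite E"
    and forests: "\<And>k. forest {e\<in>E. edge_coordinate f g e = k}" and e: "e \<in> E"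
  shows "\<not> rigid (E - {e}) (diagonal_placement f g)"
proof -
  define k where "k = edge_coordinate f g e"
  obtain a b where ab: "e = {a, b}" "a \<noteq> b" using E(1) e by (meson card_2_iff)
  obtain X where X: "a \<in> X" "b \<notin> X"
    and cut: "\<forall>e'\<in>{e\<in>E. edge_coordinate f g e = k} - {{a, b}}. e' \<subseteq> X \<or> e' \<inter> X = {}"
  proof -
    have "finite {e\<in>E. edge_coordinate f g e = k}" "\<forall>e\<in>{e\<in>E. edge_coordinate f g e = k}. card e = 2"
      "{a, b} \<in> {e\<in>E. edge_coordinate f g e = k}"
      using E e ab unfolding k_def by simp_all
    then show ?thesis using that forest_edge_cut[OF forests[of k] _ _ _ ab(2)] by blast
  qed
  define x :: "(real^2)^'a" where "x = (\<chi> v. if v \<in> X then axis k 1 else 0)"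
  have "\<forall>e'\<in>E - {e}. \<forall>u\<in>e'. \<forall>w\<in>e'. (x$u)$(edge_coordinate f g e') = (x$w)$(edge_coordinate f g e')"
  proof (intro ballI)
    fix e' u w assume e': "e' \<in> E - {e}" "u \<in> e'" "w \<in> e'"
    show "(x$u)$(edge_coordinate f g e') = (x$w)$(edge_coordinate f g e')"
    proof (cases "edge_coordinate f g e' = k")
      case True
      then have "e' \<subseteq> X \<or> e' \<inter> X = {}" using cut e'(1) ab(1) by blast
      then show ?thesis using e'(2,3) unfolding x_def by auto
    qed (simp add: x_def axis_def)
  qed
  moreover have "\<forall>e'\<in>E - {e}. card e' = 2" using E(1) by blast
  ultimately have kernel: "\<forall>u w. {u, w} \<in> E - {e} \<longrightarrow>
      frechet_derivative (edge_len u w) (at (diagonal_placement f g)) x = 0"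
    by (simp only: diagonal_placement_kernel_iff[OF inj])
  show ?thesis
  proof
    assume "rigid (E - {e}) (diagonal_placement f g)"
    then have "(\<forall>u w. {u, w} \<in> E - {e} \<longrightarrow>
        frechet_derivative (edge_len u w) (at (diagonal_placement f g)) x = 0) \<longrightarrow> (\<exists>c. \<forall>v. x$v = c)"
      unfolding rigid_def by (rule spec)
    then obtain c where "\<forall>v. x$v = c" using kernel by blast
    then have "x$a = x$b" by simp
    then show False using X unfolding x_def by (simp add: axis_eq_0_iff)
  qed
qed

lemma forest_realization_edge_coordinate:
  assumes "forest_realization V E f g"
  shows "forest {e\<in>E. edge_coordinate f g e = k}"
proof -
  have "edge_coordinate f g e = k \<longleftrightarrow> concordant f g e = (k = 1)" for e
    using exhaust_2[of k] unfolding edge_coordinate_def by auto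
  then show ?thesis using forest_realization_colour_class[OF assms] by simp
qed

text \<open>A (2,2)-tight graph has exactly \<open>2 |V| - 2\<close> edges, so two edge-disjoint forests covering it
  are spanning trees.\<close>
lemma forest_realization_spanning_trees:
  fixes E :: "'a::finite set set"
  assumes E: "card E + 2 = 2 * CARD('a)" and r: "forest_realization UNIV E f g"
  shows "card {e\<in>E. edge_coordinate f g e = k} + 1 = CARD('a)"
proof -
  have le: "card {e\<in>E. edge_coordinate f g e = i} + 1 \<le> CARD('a)" for i
    using kk_sparseD[OF forest_realization_edge_coordinate[OF r, of i], of UNIV]
    unfolding induced_edges_def by simp
  let ?A = "{e\<in>E. edge_coordinate f g e = 1}" and ?B = "{e\<in>E. edge_coordinate f g e = 2}"
  have "card (?A \<union> ?B) = card ?A + card ?B" by (rule card_Un_disjoint) auto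
  moreover have "?A \<union> ?B = E" using exhaust_2 by blast
  ultimately have "card ?A + 1 = CARD('a)" "card ?B + 1 = CARD('a)"
    using E le[of 1] le[of 2] by simp_all
  then show ?thesis using exhaust_2[of k] by auto
qed

lemma placement_diagonal_placement: "inj f \<Longrightarrow> placement (diagonal_placement f g)"
  unfolding placement_def
proof (rule injI)
  fix u w assume "inj f" and "diagonal_placement f g $ u = diagonal_placement f g $ w"
  then have "(diagonal_placement f g $ u) $ 1 + (diagonal_placement f g $ u) $ 2 =
      (diagonal_placement f g $ w) $ 1 + (diagonal_placement f g $ w) $ 2" by simp
  then have "f u = f w" unfolding diagonal_placement_def by simp
  then show "u = w" using \<open>inj f\<close> by (simp add: inj_eq)
qed

lemma well_positioned_diagonal_placement:
  assumes "inj f" "inj g" "\<forall>e\<in>E. card e = 2"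
  shows "well_positioned E (diagonal_placement f g)"
  unfolding well_positioned_def
proof (intro allI impI)
  fix u w assume "{u, w} \<in> E"
  then have "u \<noteq> w" using assms(3) by fastforce
  then have "{k. linf (diagonal_placement f g $ u - diagonal_placement f g $ w) =
      \<bar>(diagonal_placement f g $ u - diagonal_placement f g $ w) $ k\<bar>} = {edge_coordinate f g {u, w}}"
    by (rule diagonal_placement_edge(1)[OF assms(1,2)])
  then show "card {k. linf (diagonal_placement f g $ u - diagonal_placement f g $ w) =
      \<bar>(diagonal_placement f g $ u - diagonal_placement f g $ w) $ k\<bar>} = 1"
    by simp
qed

theorem corollary4p4:
  fixes E :: "'a::finite set set"
  assumes "simple_graph E" and "tight22 E"
  shows "\<exists>p::(real^2)^'a. placement p \<and> well_positioned E p \<and> minimally_rigid E p"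
proof -
  have edges: "\<forall>e\<in>E. card e = 2" using assms(1) unfolding simple_graph_def .
  then have "graph_on UNIV E" unfolding graph_on_def by simp
  moreover have "kk_sparse 2 E" and count: "card E + 2 = 2 * CARD('a)"
    using assms(2) unfolding tight22_def kk_sparse_def induced_edges_def by (auto simp: nat_le_iff)
  ultimately obtain f g where r: "forest_realization UNIV E f g" using forest_realization_exists by blast
  then have inj: "inj f" "inj g" unfolding forest_realization_def by simp_all
  have "rigid E (diagonal_placement f g)"
    using rigid_diagonal_placement[OF inj edges forest_realization_edge_coordinate[OF r]
        forest_realization_spanning_trees[OF count r]] .
  moreover have "\<not> rigid (E - {e}) (diagonal_placement f g)" if "e \<in> E" for e
    using diagonal_placement_not_rigid_delete_edge[OF inj edges _ forest_realization_edge_coordinate[OF r] that]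
    by simp
  ultimately show ?thesis
    using placement_diagonal_placement[OF inj(1)] well_positioned_diagonal_placement[OF inj edges]
    unfolding minimally_rigid_def by blast
qed

end
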